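(* Let $\Sigma$ be a signed graph, $B$ a block of $\Sigma$ containing at least one circle, and $v$ a vertex of $B$. Then every circle of $B$ containing $v$ is negative if and only if $\deg_B(v)=2$ and $e_v$ is a balancing edge of $B{\downarrow}v$.
   Context: A signed graph $\Sigma=(G,\sigma)$ is a finite graph $G$ with signature $\sigma:E(G)\to\{+,-\}$. A circle is a connected 2-regular subgraph; its sign is the product of its edge signs. A block is a maximal subgraph without a cutpoint; $\deg_B(v)$ is the number of edges of $B$ incident with $v$. Switching by $\zeta:V\to\{+,-\}$ replaces $\sigma(f)$ by $\zeta(u)\sigma(f)\zeta(w)$; an edge $b$ is a balancing edge of a signed graph if it can be switched so that $b$ is the only negative edge. If $\deg_B(v)=2$ with incident edges $vv_1,vv_2$, $B{\downarrow}v$ is obtained by deleting $v$ and these edges and adding a new edge $e_v$ joining $v_1,v_2$ with sign $\sigma(vv_1)\sigma(vv_2)$. *)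

theory Defs
  imports Main
begin

text \<open>A (multi)graph is given by a vertex set V, an edge set E and an endpoint
  map ends :: 'e => 'v * 'v (an unordered edge stored with an arbitrary
  orientation; a loop has equal endpoints).\<close>

definition is_graph :: "'v set \<Rightarrow> 'e set \<Rightarrow> ('e \<Rightarrow> 'v \<times> 'v) \<Rightarrow> bool" where
  "is_graph V E ends \<longleftrightarrow> finite V \<and> finite E \<and>
     (\<forall>e\<in>E. fst (ends e) \<in> V \<and> snd (ends e) \<in> V)"

definition incident :: "('e \<Rightarrow> 'v \<times> 'v) \<Rightarrow> 'v \<Rightarrow> 'e \<Rightarrow> bool" where
  "incident ends x e \<longleftrightarrow> x = fst (ends e) \<or> x = snd (ends e)"

definition subgraph :: "('e \<Rightarrow> 'v \<times> 'v) \<Rightarrow> 'v set \<Rightarrow> 'e set \<Rightarrow> 'v set \<Rightarrow> 'e set \<Rightarrow> bool" where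
  "subgraph ends W F V E \<longleftrightarrow> W \<subseteq> V \<and> F \<subseteq> E \<and>
     (\<forall>e\<in>F. fst (ends e) \<in> W \<and> snd (ends e) \<in> W)"

definition adj :: "('e \<Rightarrow> 'v \<times> 'v) \<Rightarrow> 'e set \<Rightarrow> ('v \<times> 'v) set" where
  "adj ends F = {(a, b). \<exists>e\<in>F. ends e = (a, b) \<or> ends e = (b, a)}"

definition connected_g :: "('e \<Rightarrow> 'v \<times> 'v) \<Rightarrow> 'v set \<Rightarrow> 'e set \<Rightarrow> bool" where
  "connected_g ends W F \<longleftrightarrow> W \<noteq> {} \<and> (\<forall>a\<in>W. \<forall>b\<in>W. (a, b) \<in> (adj ends F)\<^sup>*)"

definition reach :: "('e \<Rightarrow> 'v \<times> 'v) \<Rightarrow> 'v set \<Rightarrow> 'e set \<Rightarrow> ('v \<times> 'v) set" where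
  "reach ends W F = {(a, b). a \<in> W \<and> b \<in> W \<and> (a, b) \<in> (adj ends F)\<^sup>*}"

definition ncomp :: "('e \<Rightarrow> 'v \<times> 'v) \<Rightarrow> 'v set \<Rightarrow> 'e set \<Rightarrow> nat" where
  "ncomp ends W F = card (W // reach ends W F)"

definition cutpoint :: "('e \<Rightarrow> 'v \<times> 'v) \<Rightarrow> 'v set \<Rightarrow> 'e set \<Rightarrow> 'v \<Rightarrow> bool" where
  "cutpoint ends W F x \<longleftrightarrow> x \<in> W \<and>
     ncomp ends (W - {x}) {e\<in>F. \<not> incident ends x e} > ncomp ends W F"

definition block :: "('e \<Rightarrow> 'v \<times> 'v) \<Rightarrow> 'v set \<Rightarrow> 'e set \<Rightarrow> 'v set \<Rightarrow> 'e set \<Rightarrow> bool" where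
  "block ends V E W F \<longleftrightarrow>
     subgraph ends W F V E \<and> connected_g ends W F \<and> (\<nexists>x. cutpoint ends W F x) \<and>
     (\<forall>W' F'. subgraph ends W' F' V E \<and> W \<subseteq> W' \<and> F \<subseteq> F' \<and>
        connected_g ends W' F' \<and> (\<nexists>x. cutpoint ends W' F' x) \<longrightarrow> W' = W \<and> F' = F)"

text \<open>Degree with loops counted twice (used for 2-regularity).\<close>
definition deg2 :: "('e \<Rightarrow> 'v \<times> 'v) \<Rightarrow> 'e set \<Rightarrow> 'v \<Rightarrow> nat" where
  "deg2 ends F x = card {e\<in>F. fst (ends e) = x} + card {e\<in>F. snd (ends e) = x}"

definition circle :: "('e \<Rightarrow> 'v \<times> 'v) \<Rightarrow> 'v set \<Rightarrow> 'e set \<Rightarrow> 'v set \<Rightarrow> 'e set \<Rightarrow> bool" where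
  "circle ends V E W F \<longleftrightarrow> subgraph ends W F V E \<and> connected_g ends W F \<and>
     (\<forall>x\<in>W. deg2 ends F x = 2)"

definition degree :: "('e \<Rightarrow> 'v \<times> 'v) \<Rightarrow> 'e set \<Rightarrow> 'v \<Rightarrow> nat" where
  "degree ends F x = card {e\<in>F. incident ends x e}"

definition switch_sign :: "('e \<Rightarrow> 'v \<times> 'v) \<Rightarrow> ('e \<Rightarrow> int) \<Rightarrow> ('v \<Rightarrow> int) \<Rightarrow> 'e \<Rightarrow> int" where
  "switch_sign ends \<sigma> \<zeta> e = \<zeta> (fst (ends e)) * \<sigma> e * \<zeta> (snd (ends e))"

definition balancing_edge ::
  "'v set \<Rightarrow> 'e set \<Rightarrow> ('e \<Rightarrow> 'v \<times> 'v) \<Rightarrow> ('e \<Rightarrow> int) \<Rightarrow> 'e \<Rightarrow> bool" where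
  "balancing_edge V E ends \<sigma> b \<longleftrightarrow> b \<in> E \<and>
     (\<exists>\<zeta>. (\<forall>x. \<zeta> x \<in> {1, -1}) \<and>
        (\<forall>f\<in>E. switch_sign ends \<sigma> \<zeta> f = (if f = b then -1 else 1)))"

definition other_end :: "('e \<Rightarrow> 'v \<times> 'v) \<Rightarrow> 'v \<Rightarrow> 'e \<Rightarrow> 'v" where
  "other_end ends v e = (if fst (ends e) = v then snd (ends e) else fst (ends e))"

text \<open>B down v, for the two edges e1 = v v1, e2 = v v2 at v: edges are
  Some e for the remaining edges e of B, and the new edge e_v = None.\<close>
definition down_E :: "'e set \<Rightarrow> 'e \<Rightarrow> 'e \<Rightarrow> 'e option set" where
  "down_E F e1 e2 = Some ` (F - {e1, e2}) \<union> {None}"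

definition down_ends :: "('e \<Rightarrow> 'v \<times> 'v) \<Rightarrow> 'v \<Rightarrow> 'e \<Rightarrow> 'e \<Rightarrow> 'e option \<Rightarrow> 'v \<times> 'v" where
  "down_ends ends v e1 e2 = (\<lambda>x. case x of None \<Rightarrow> (other_end ends v e1, other_end ends v e2)
                                        | Some e \<Rightarrow> ends e)"

definition down_sigma :: "('e \<Rightarrow> int) \<Rightarrow> 'e \<Rightarrow> 'e \<Rightarrow> 'e option \<Rightarrow> int" where
  "down_sigma \<sigma> e1 e2 = (\<lambda>x. case x of None \<Rightarrow> \<sigma> e1 * \<sigma> e2 | Some e \<Rightarrow> \<sigma> e)"

end

theory Submission
  imports Defs
begin

text \<open>
  Suppose every circle through \<open>v\<close> is negative. Three edges at \<open>v\<close> are impossible: paths in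
  \<open>B - v\<close> between their other ends form a theta graph, and the product of the signs of its three
  circles through \<open>v\<close> is a square, hence positive. So \<open>v\<close> has exactly two edges \<open>e\<^sub>1 = vu\<^sub>1\<close>,
  \<open>e\<^sub>2 = vu\<^sub>2\<close>, and every \<open>u\<^sub>1\<close>-\<open>u\<^sub>2\<close> path in \<open>B - v\<close> has sign \<open>-\<sigma>(e\<^sub>1)\<sigma>(e\<^sub>2)\<close>.
  Moreover \<open>B - v\<close> is balanced: by 2-connectedness a negative circle \<open>Q\<close> avoiding \<open>v\<close> is reached
  from \<open>v\<close> by a fan of two paths meeting only at \<open>v\<close>, and closing the fan along either arc of
  \<open>Q\<close> gives two circles through \<open>v\<close> of opposite signs. Switching \<open>B - v\<close> by the signs of walks
  from \<open>u\<^sub>1\<close> makes all its edges positive and \<open>e\<^sub>v\<close> negative.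

  Conversely, a switching function balancing \<open>B\<down>v\<close>, extended by \<open>+1\<close> at \<open>v\<close>, leaves circle signs
  unchanged; a circle through \<open>v\<close> uses both \<open>e\<^sub>1\<close> and \<open>e\<^sub>2\<close>, whose switched signs multiply
  to the switched sign of \<open>e\<^sub>v\<close>, and all its other edges become positive.
\<close>

lemma tl_rev: "tl (rev xs) = rev (butlast xs)"
  by (induction xs) (auto simp: tl_append split: list.split)

lemma count_list_distinct: "distinct xs \<Longrightarrow> count_list xs y = (if y \<in> set xs then 1 else 0)"
  by (induction xs) auto

definition walk_sign :: "('e \<Rightarrow> int) \<Rightarrow> 'e list \<Rightarrow> int" where
  "walk_sign \<sigma> es = prod_list (map \<sigma> es)"

lemma walk_sign_simps[simp]: "walk_sign \<sigma> [] = 1" "walk_sign \<sigma> (e#es) = \<sigma> e * walk_sign \<sigma> es"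
  "walk_sign \<sigma> (as @ bs) = walk_sign \<sigma> as * walk_sign \<sigma> bs"
  "walk_sign \<sigma> (rev es) = walk_sign \<sigma> es"
  by (auto simp: walk_sign_def) (induction es, auto simp: mult.commute)

lemma prod_set_eq_walk_sign: "distinct es \<Longrightarrow> (\<Prod>e\<in>set es. \<sigma> e) = walk_sign \<sigma> es"
  by (simp add: walk_sign_def prod.distinct_set_conv_list)

lemma walk_sign_pm1: "\<forall>e\<in>set es. \<sigma> e \<in> {1,-1} \<Longrightarrow> walk_sign \<sigma> es \<in> {1,-1}"
  by (induction es) auto

context fixes ends :: "'e \<Rightarrow> 'v \<times> 'v" begin

fun walk :: "'e set \<Rightarrow> 'v \<Rightarrow> 'e list \<Rightarrow> bool" where
  "walk S x [] = True"
| "walk S x (e#es) = (e \<in> S \<and> incident ends x e \<and> walk S (other_end ends x e) es)"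

fun walk_end :: "'v \<Rightarrow> 'e list \<Rightarrow> 'v" where
  "walk_end x [] = x"
| "walk_end x (e#es) = walk_end (other_end ends x e) es"

fun walk_verts :: "'v \<Rightarrow> 'e list \<Rightarrow> 'v list" where
  "walk_verts x [] = [x]"
| "walk_verts x (e#es) = x # walk_verts (other_end ends x e) es"

abbreviation path :: "'e set \<Rightarrow> 'v \<Rightarrow> 'e list \<Rightarrow> bool" where
  "path S x es \<equiv> walk S x es \<and> distinct (walk_verts x es)"

lemma walk_verts_not_Nil[simp]: "walk_verts x es \<noteq> []" by (cases es) auto
lemma last_walk_verts[simp]: "last (walk_verts x es) = walk_end x es"
  by (induction es arbitrary: x) auto
lemma start_in_walk_verts[simp]: "x \<in> set (walk_verts x es)" by (cases es) auto
lemma walk_end_in_walk_verts[simp]: "walk_end x es \<in> set (walk_verts x es)"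
  using last_in_set[OF walk_verts_not_Nil] last_walk_verts by metis

lemma walk_append[simp]: "walk S x (as @ bs) = (walk S x as \<and> walk S (walk_end x as) bs)"
  by (induction as arbitrary: x) auto
lemma walk_end_append[simp]: "walk_end x (as @ bs) = walk_end (walk_end x as) bs"
  by (induction as arbitrary: x) auto
lemma walk_verts_eq_Cons_tl: "walk_verts x es = x # tl (walk_verts x es)" by (cases es) auto
lemma walk_verts_append: "walk_verts x (as @ bs) = walk_verts x as @ tl (walk_verts (walk_end x as) bs)"
  by (induction as arbitrary: x) (simp_all, metis walk_verts_eq_Cons_tl)
lemma walk_verts_append_butlast: "walk_verts x (as @ bs) = butlast (walk_verts x as) @ walk_verts (walk_end x as) bs"
  by (induction as arbitrary: x) auto
lemma length_walk_verts: "length (walk_verts x es) = Suc (length es)"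
  by (induction es arbitrary: x) auto

lemma walk_verts_snoc_end: "walk_verts x as = butlast (walk_verts x as) @ [walk_end x as]"
  by (metis append_butlast_last_id last_walk_verts walk_verts_not_Nil)
lemma set_walk_verts_append: "set (walk_verts x (as @ bs))
    = set (walk_verts x as) \<union> set (walk_verts (walk_end x as) bs)"
proof -
  have "set (walk_verts x as) = set (butlast (walk_verts x as)) \<union> {walk_end x as}" by (subst walk_verts_snoc_end) simp
  moreover have "walk_end x as \<in> set (walk_verts (walk_end x as) bs)" by simp
  ultimately show ?thesis by (auto simp: walk_verts_append_butlast)
qed

lemma butlast_walk_verts_append: "butlast (walk_verts x (as @ bs))
    = butlast (walk_verts x as) @ butlast (walk_verts (walk_end x as) bs)"
  by (simp add: walk_verts_append_butlast butlast_append)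
lemma tl_walk_verts_append: "tl (walk_verts x (as @ bs)) = tl (walk_verts x as) @ tl (walk_verts (walk_end x as) bs)"
  by (simp add: walk_verts_append)
lemma tl_walk_verts_not_Nil: "as \<noteq> [] \<Longrightarrow> tl (walk_verts x as) \<noteq> []"
  using length_walk_verts[of x as] by (cases "walk_verts x as") auto
lemma last_tl_walk_verts: "as \<noteq> [] \<Longrightarrow> last (tl (walk_verts x as)) = walk_end x as"
  using tl_walk_verts_not_Nil[of as x] by (metis last_tl last_walk_verts walk_verts_not_Nil)
lemma butlast_walk_verts_Cons: "as \<noteq> []
    \<Longrightarrow> butlast (walk_verts x as) = x # butlast (tl (walk_verts x as))"
  by (cases as) auto
lemma butlast_walk_verts_suffix: "set (butlast (walk_verts (walk_end x as) bs)) \<subseteq> set (butlast (walk_verts x (as @ bs)))"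
  by (simp add: butlast_walk_verts_append)

lemma other_end_other_end: "incident ends x e \<Longrightarrow> other_end ends (other_end ends x e) e = x"
  by (auto simp: incident_def other_end_def)

lemma incident_other_end: "incident ends x e \<Longrightarrow> incident ends (other_end ends x e) e"
  by (auto simp: incident_def other_end_def)

lemma walk_rev: "walk S x es \<Longrightarrow> walk S (walk_end x es) (rev es) \<and> walk_end (walk_end x es) (rev es) = x
   \<and> walk_verts (walk_end x es) (rev es) = rev (walk_verts x es)"
proof (induction es arbitrary: x)
  case Nil then show ?case by simp
next
  case (Cons e es)
  let ?y = "other_end ends x e"
  from Cons have w: "walk S ?y es" "e \<in> S" "incident ends x e" by auto
  from Cons.IH[OF w(1)] have ih: "walk S (walk_end ?y es) (rev es)" "walk_end (walk_end ?y es) (rev es) = ?y"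
    "walk_verts (walk_end ?y es) (rev es) = rev (walk_verts ?y es)" by auto
  have "walk_verts ?y [e] = [?y, x]" using other_end_other_end[OF w(3)] by simp
  then show ?case using ih w other_end_other_end[OF w(3)] incident_other_end[OF w(3)]
    by (auto simp: walk_verts_append)
qed

lemma path_rev:
  assumes "path S x es"
  shows "path S (walk_end x es) (rev es)" "walk_end (walk_end x es) (rev es) = x"
    "walk_verts (walk_end x es) (rev es) = rev (walk_verts x es)"
  using walk_rev[OF conjunct1[OF assms]] assms by auto

lemma walk_mono: "walk S x es \<Longrightarrow> set es \<subseteq> T \<Longrightarrow> walk T x es"
  by (induction es arbitrary: x) auto

lemma walk_edges_subset: "walk S x es \<Longrightarrow> set es \<subseteq> S"
  by (induction es arbitrary: x) auto

lemma walk_edge_ends_in_verts: "walk S x es \<Longrightarrow> e \<in> set es \<Longrightarrow>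
   fst (ends e) \<in> set (walk_verts x es) \<and> snd (ends e) \<in> set (walk_verts x es)"
proof (induction es arbitrary: x)
  case (Cons f es)
  then show ?case
    by (cases "e = f") (auto simp: incident_def other_end_def)
qed simp

lemma walk_verts_subset_ends: "walk S x es
    \<Longrightarrow> set (walk_verts x es) \<subseteq> insert x (fst ` ends ` set es \<union> snd ` ends ` set es)"
proof (induction es arbitrary: x)
  case (Cons f es)
  then show ?case by (fastforce simp: incident_def other_end_def)
qed simp

lemma walk_avoids_unincident_vertex: "walk S x es \<Longrightarrow> x \<noteq> p
    \<Longrightarrow> (\<forall>e\<in>S. \<not> incident ends p e) \<Longrightarrow> p \<notin> set (walk_verts x es)"
proof (induction es arbitrary: x)
  case (Cons f es)
  then show ?case by (auto simp: incident_def other_end_def split: if_splits)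
qed simp

lemma walk_split_at_vertex: "y \<in> set (walk_verts x es)
    \<Longrightarrow> \<exists>as bs. es = as @ bs \<and> walk_end x as = y"
proof (induction es arbitrary: x)
  case Nil then show ?case by simp
next
  case (Cons e es)
  show ?case
  proof (cases "y = x")
    case True then show ?thesis by (intro exI[of _ "[]"] exI[of _ "e#es"]) auto
  next
    case False
    with Cons.prems have "y \<in> set (walk_verts (other_end ends x e) es)" by simp
    from Cons.IH[OF this] obtain as bs where "es = as @ bs" "walk_end (other_end ends x e) as = y" by blast
    then show ?thesis by (intro exI[of _ "e#as"] exI[of _ bs]) auto
  qed
qed

lemma walk_repeated_vertex: "\<not> distinct (walk_verts x es)
    \<Longrightarrow> \<exists>A L R. es = A @ L @ R \<and> L \<noteq> [] \<and> walk_end (walk_end x A) L = walk_end x A"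
proof (induction es arbitrary: x)
  case Nil then show ?case by simp
next
  case (Cons e es)
  let ?y = "other_end ends x e"
  show ?case
  proof (cases "x \<in> set (walk_verts ?y es)")
    case True
    from walk_split_at_vertex[OF this] obtain as bs where "es = as @ bs" "walk_end ?y as = x" by blast
    then show ?thesis by (intro exI[of _ "[]"] exI[of _ "e#as"] exI[of _ bs]) auto
  next
    case False
    with Cons.prems have "\<not> distinct (walk_verts ?y es)" by simp
    from Cons.IH[OF this] obtain A L R where "es = A @ L @ R" "L \<noteq> []" "walk_end (walk_end ?y A) L = walk_end ?y A"
      by blast
    then show ?thesis by (intro exI[of _ "e#A"] exI[of _ L] exI[of _ R]) auto
  qed
qed

lemma walk_first_hit: "walk_end x es \<in> Z \<Longrightarrow> \<exists>as bs. es = as @ bs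
    \<and> walk_end x as \<in> Z \<and> set (butlast (walk_verts x as)) \<inter> Z = {}"
proof (induction es arbitrary: x)
  case Nil then show ?case by (intro exI[of _ "[]"]) auto
next
  case (Cons e es)
  let ?y = "other_end ends x e"
  show ?case
  proof (cases "x \<in> Z")
    case True then show ?thesis by (intro exI[of _ "[]"] exI[of _ "e#es"]) auto
  next
    case False
    from Cons.prems have "walk_end ?y es \<in> Z" by simp
    from Cons.IH[OF this] obtain as bs where "es = as @ bs" "walk_end ?y as \<in> Z" "set (butlast (walk_verts ?y as)) \<inter> Z = {}"
      by blast
    then show ?thesis using False by (intro exI[of _ "e#as"] exI[of _ bs]) auto
  qed
qed

lemma distinct_walk_verts_append_iff:
  "distinct (walk_verts x (as @ bs)) \<longleftrightarrow> distinct (walk_verts x as)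
      \<and> distinct (walk_verts (walk_end x as) bs)
     \<and> set (walk_verts x as) \<inter> set (walk_verts (walk_end x as) bs) = {walk_end x as}"
proof -
  obtain l where l: "walk_verts x as = l @ [walk_end x as]" by (metis walk_verts_snoc_end)
  have "walk_end x as \<in> set (walk_verts (walk_end x as) bs)" by simp
  then show ?thesis using l by (auto simp: walk_verts_append_butlast)
qed

lemma set_butlast_walk_verts: "distinct (walk_verts x D)
    \<Longrightarrow> set (butlast (walk_verts x D)) = set (walk_verts x D) - {walk_end x D}"
proof -
  assume d: "distinct (walk_verts x D)"
  obtain bl w where e: "walk_verts x D = bl @ [w]" "w = walk_end x D"
    using walk_verts_snoc_end by blast
  then have "butlast (walk_verts x D) = bl" by simp
  then show ?thesis using d e by auto
qed

lemma distinct_closed_walk_Nil: "distinct (walk_verts x as) \<Longrightarrow> walk_end x as = x \<Longrightarrow> as = []"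
proof (rule ccontr)
  assume a: "distinct (walk_verts x as)" "walk_end x as = x" "as \<noteq> []"
  have "x \<in> set (tl (walk_verts x as))"
    using last_tl_walk_verts[OF a(3)] a(2) tl_walk_verts_not_Nil[OF a(3)] by (metis last_in_set)
  then show False using a(1) walk_verts_eq_Cons_tl[of x as] by (metis distinct.simps(2))
qed

lemma path_distinct_edges: "walk S x es \<Longrightarrow> distinct (walk_verts x es) \<Longrightarrow> distinct es"
proof (induction es arbitrary: x)
  case (Cons e es)
  let ?y = "other_end ends x e"
  have "e \<notin> set es"
  proof
    assume "e \<in> set es"
    from walk_edge_ends_in_verts[of S ?y es e] this Cons.prems have "fst (ends e) \<in> set (walk_verts ?y es)" "snd (ends e) \<in> set (walk_verts ?y es)"
      by auto
    moreover have "x = fst (ends e) \<or> x = snd (ends e)" using Cons.prems by (auto simp: incident_def)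
    ultimately show False using Cons.prems by auto
  qed
  then show ?case using Cons by auto
qed simp

lemma path_with_edge_between_ends:
  assumes "walk S a es" "distinct (walk_verts a es)" "e \<in> set es" "incident ends a e" "incident ends (walk_end a es) e"
    "a \<noteq> walk_end a es"
  shows "es = [e]"
proof (cases es)
  case Nil then show ?thesis using assms by simp
next
  case (Cons f es')
  let ?a' = "other_end ends a f"
  show ?thesis
  proof (cases "f = e")
    case True
    then have "?a' = walk_end a es" using assms(4,5,6) by (auto simp: incident_def other_end_def)
    moreover have "distinct (walk_verts ?a' es')" "walk_end ?a' es' = walk_end a es" using assms(2) Cons by auto
    ultimately have "es' = []" using distinct_closed_walk_Nil by metis
    then show ?thesis using Cons True by simp
  next
    case False
    then have "e \<in> set es'" using assms(3) Cons by simp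
    moreover have "walk S ?a' es'" using assms(1) Cons by simp
    ultimately have "fst (ends e) \<in> set (walk_verts ?a' es') \<and> snd (ends e) \<in> set (walk_verts ?a' es')"
      using walk_edge_ends_in_verts by metis
    then have "a \<in> set (walk_verts ?a' es')" using assms(4) by (auto simp: incident_def)
    then show ?thesis using assms(2) Cons by simp
  qed
qed

lemma closed_walk_distinct_edges:
  assumes "walk S x c" "walk_end x c = x" "distinct (tl (walk_verts x c))" "2 < length c"
    and loopless: "\<forall>e\<in>S. fst (ends e) \<noteq> snd (ends e)"
  shows "distinct c"
proof -
  obtain e c' where c: "c = e # c'" using assms(4) by (cases c) auto
  let ?z = "other_end ends x e"
  have w: "walk S ?z c'" "walk_end ?z c' = x" "e \<in> S" "incident ends x e"
    and d: "distinct (walk_verts ?z c')" using assms(1-3) c by auto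
  have "x \<noteq> ?z" using w(3,4) loopless by (auto simp: incident_def other_end_def)
  moreover have "c' \<noteq> [e]" using assms(4) c by auto
  ultimately have "e \<notin> set c'"
    using path_with_edge_between_ends[OF w(1) d _ incident_other_end[OF w(4)]] w(2,4) by auto
  then show ?thesis using c path_distinct_edges[OF w(1) d] by simp
qed

lemma length_filter_fst_snd: "(\<forall>e\<in>set c. fst (ends e) \<noteq> snd (ends e)) \<Longrightarrow>
  length (filter (\<lambda>e. fst (ends e) = y) c) + length (filter (\<lambda>e. snd (ends e) = y) c)
    = length (filter (incident ends y) c)"
  by (induction c) (auto simp: incident_def)

lemma length_filter_incident: "walk S x c
    \<Longrightarrow> (\<forall>e\<in>S. fst (ends e) \<noteq> snd (ends e)) \<Longrightarrow>
  length (filter (incident ends y) c)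
      = count_list (butlast (walk_verts x c)) y + count_list (tl (walk_verts x c)) y"
proof (induction c arbitrary: x)
  case (Cons e c)
  let ?z = "other_end ends x e"
  have "incident ends y e = (y = x \<or> y = ?z)" "x \<noteq> ?z" using Cons.prems
    by (auto simp: incident_def other_end_def)
  moreover have "butlast (walk_verts x (e#c)) = x # butlast (walk_verts ?z c)" by simp
  moreover have "tl (walk_verts x (e#c)) = walk_verts ?z c" by simp
  moreover have "count_list (walk_verts ?z c) y = (if ?z = y then 1 else 0) + count_list (tl (walk_verts ?z c)) y"
    by (subst walk_verts_eq_Cons_tl) simp
  moreover have "walk S ?z c" using Cons.prems by simp
  ultimately show ?case using Cons.IH[of ?z] Cons.prems(2) by (auto simp del: walk_verts.simps)
qed simp

lemma closed_walk_verts: assumes "walk_end x c = x" "c \<noteq> []"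
  shows "\<exists>bl. walk_verts x c = x # bl @ [x]"
proof -
  obtain l where l: "walk_verts x c = x # l" using walk_verts_eq_Cons_tl by metis
  have "l \<noteq> []" using assms l length_walk_verts[of x c] by (cases c) auto
  have "last l = x" using assms l \<open>l \<noteq> []\<close> last_walk_verts[of x c] by simp
  then have "l = butlast l @ [x]" using append_butlast_last_id[OF \<open>l \<noteq> []\<close>] by simp
  then have "walk_verts x c = x # butlast l @ [x]" using l by simp
  then show ?thesis by blast
qed

lemma closed_walk_count_list: assumes "walk_end x c = x" "c \<noteq> []"
  shows "count_list (butlast (walk_verts x c)) y = count_list (tl (walk_verts x c)) y"
proof -
  obtain bl where "walk_verts x c = x # bl @ [x]" using closed_walk_verts[OF assms] by blast
  then show ?thesis by (simp add: butlast_append)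
qed

lemma rtrancl_adj_walk: "(a, b) \<in> (adj ends S)\<^sup>*
    \<Longrightarrow> \<exists>es. walk S a es \<and> walk_end a es = b"
proof (induction rule: rtrancl_induct)
  case base then show ?case by (intro exI[of _ "[]"]) auto
next
  case (step y z)
  then obtain es where es: "walk S a es" "walk_end a es = y" by blast
  from step(2) obtain e where e: "e \<in> S" "ends e = (y, z) \<or> ends e = (z, y)" by (auto simp: adj_def)
  then have "incident ends y e" "other_end ends y e = z" by (cases "ends e"; auto simp: incident_def other_end_def)+
  then show ?case using es e by (intro exI[of _ "es @ [e]"]) auto
qed

lemma walk_rtrancl_adj: "walk S x es \<Longrightarrow> y \<in> set (walk_verts x es)
    \<Longrightarrow> (x, y) \<in> (adj ends (set es))\<^sup>*"
proof (induction es arbitrary: x)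
  case (Cons e es)
  let ?z = "other_end ends x e"
  have "(x, ?z) \<in> adj ends (set (e#es))" using Cons.prems
    by (auto simp: adj_def incident_def other_end_def) (metis prod.collapse)+
  moreover have "(adj ends (set es))\<^sup>* \<subseteq> (adj ends (set (e#es)))\<^sup>*"
    by (rule rtrancl_mono) (auto simp: adj_def)
  ultimately show ?case using Cons by (auto intro: converse_rtrancl_into_rtrancl)
qed simp

lemma walk_to_path: "walk S x es \<Longrightarrow> \<exists>ps. walk S x ps
    \<and> walk_end x ps = walk_end x es \<and> distinct (walk_verts x ps)
   \<and> set ps \<subseteq> set es \<and> set (walk_verts x ps) \<subseteq> set (walk_verts x es)"
proof (induction es arbitrary: x)
  case Nil then show ?case by (intro exI[of _ "[]"]) auto
next
  case (Cons e es)
  let ?y = "other_end ends x e"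
  from Cons.prems have "walk S ?y es" by simp
  from Cons.IH[OF this] obtain ps where ps: "walk S ?y ps" "walk_end ?y ps = walk_end ?y es" "distinct (walk_verts ?y ps)"
    "set ps \<subseteq> set es" "set (walk_verts ?y ps) \<subseteq> set (walk_verts ?y es)" by blast
  show ?case
  proof (cases "x \<in> set (walk_verts ?y ps)")
    case False
    then show ?thesis using ps Cons.prems by (intro exI[of _ "e#ps"]) auto
  next
    case True
    from walk_split_at_vertex[OF True] obtain as bs where ab: "ps = as @ bs" "walk_end ?y as = x" by blast
    have "distinct (walk_verts x bs)" using ps(3) ab by (simp add: walk_verts_append_butlast)
    moreover have "set (walk_verts x bs) \<subseteq> set (walk_verts ?y ps)"
      using ab by (auto simp: walk_verts_append_butlast)
    ultimately show ?thesis using ps ab by (intro exI[of _ bs]) auto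
  qed
qed

lemma path_segment_between:
  assumes P: "path S x es" "x \<in> X" "walk_end x es \<in> Y" and XY: "X \<inter> Y = {}"
  obtains d D where "d \<in> X" "path S d D" "walk_end d D \<in> Y" "set (walk_verts d D) \<subseteq> set (walk_verts x es)"
    "set (walk_verts d D) \<inter> X = {d}" "set (walk_verts d D) \<inter> Y = {walk_end d D}"
proof -
  from walk_first_hit[OF P(3)] obtain A bs where A: "es = A @ bs" "walk_end x A \<in> Y"
    "set (butlast (walk_verts x A)) \<inter> Y = {}" by blast
  define y where "y = walk_end x A"
  have pA: "path S x A" using P(1) A(1) by (simp add: distinct_walk_verts_append_iff)
  note rA = path_rev[OF pA, folded y_def]
  have "walk_end y (rev A) \<in> X" using rA(2) P(2) by simp
  from walk_first_hit[OF this] obtain A' cs where A': "rev A = A' @ cs" "walk_end y A' \<in> X"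
    "set (butlast (walk_verts y A')) \<inter> X = {}" by blast
  define d where "d = walk_end y A'"
  have pA': "path S y A'" using rA(1) A'(1) by (simp add: distinct_walk_verts_append_iff)
  note rA' = path_rev[OF pA', folded d_def]
  have sub: "set (walk_verts y A') \<subseteq> set (walk_verts x A)"
    using A'(1) rA(3) set_walk_verts_append[of y A' cs] by auto
  have "set (walk_verts x A) \<subseteq> set (walk_verts x es)"
    using A(1) set_walk_verts_append[of x A bs] by auto
  moreover have "set (walk_verts x A) \<inter> Y = {y}"
    using A(2,3) unfolding y_def by (subst walk_verts_snoc_end) auto
  then have "set (walk_verts y A') \<inter> Y = {y}"
    using sub start_in_walk_verts[of y A'] by blast
  moreover have "set (walk_verts y A') \<inter> X = {d}"
    using A'(2,3) unfolding d_def by (subst walk_verts_snoc_end) auto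
  ultimately show thesis
    using that[of d "rev A'"] A'(2) A(2) rA' sub unfolding d_def[symmetric] y_def[symmetric] by auto
qed

lemma negative_closed_walk_contains_negative_cycle:
  assumes "walk S x c" "walk_end x c = x" "walk_sign \<sigma> c = -1" and sig: "\<forall>e\<in>S. \<sigma> e \<in> {1,-1}"
  shows "\<exists>y q. walk S y q \<and> walk_end y q = y \<and> q \<noteq> [] \<and> distinct (tl (walk_verts y q))
     \<and> walk_sign \<sigma> q = -1 \<and> set (walk_verts y q) \<subseteq> set (walk_verts x c)"
  using assms(1-3)
proof (induction "length c" arbitrary: x c rule: less_induct)
  case less
  show ?case
  proof (cases c)
    case Nil then show ?thesis using less by simp
  next
    case (Cons e c')
    let ?z = "other_end ends x e"
    have wc': "walk S ?z c'" "walk_end ?z c' = x" using less.prems Cons by auto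
    show ?thesis
    proof (cases "distinct (walk_verts ?z c')")
      case True
      then show ?thesis using less.prems Cons by (intro exI[of _ x] exI[of _ c]) auto
    next
      case False
      from walk_repeated_vertex[OF False] obtain A L R where ALR: "c' = A @ L @ R" "L \<noteq> []"
        "walk_end (walk_end ?z A) L = walk_end ?z A" by blast
      let ?p = "walk_end ?z A"
      let ?c1 = "e # A @ R"
      have w1: "walk S x ?c1" "walk_end x ?c1 = x" using less.prems Cons wc' ALR by auto
      have w2: "walk S ?p L" "walk_end ?p L = ?p" using wc' ALR by auto
      have "walk_sign \<sigma> c = walk_sign \<sigma> ?c1 * walk_sign \<sigma> L" using Cons ALR by simp
      moreover have "walk_sign \<sigma> ?c1 \<in> {1,-1}" "walk_sign \<sigma> L \<in> {1,-1}"
        using walk_sign_pm1[of ?c1 \<sigma>] walk_sign_pm1[of L \<sigma>] walk_edges_subset w1 w2 sig by blast+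
      ultimately have "walk_sign \<sigma> ?c1 = -1 \<or> walk_sign \<sigma> L = -1" using less.prems(3) by auto
      moreover have "set (walk_verts x ?c1) \<subseteq> set (walk_verts x c)" "set (walk_verts ?p L) \<subseteq> set (walk_verts x c)"
        using Cons ALR by (auto simp: set_walk_verts_append)
      moreover have "length ?c1 < length c" "length L < length c" using Cons ALR by auto
      ultimately show ?thesis using less.hyps w1 w2 by (meson subset_trans)
    qed
  qed
qed

lemma closed_path_two_arcs:
  assumes q: "walk S y q" "walk_end y q = y" "distinct (tl (walk_verts y q))"
    and t: "t1 \<in> set (walk_verts y q)" "t2 \<in> set (walk_verts y q)" "t1 \<noteq> t2"
  obtains \<alpha> \<beta> where "path S t1 \<alpha>" "walk_end t1 \<alpha> = t2" "path S t1 \<beta>" "walk_end t1 \<beta> = t2"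
    "set (walk_verts t1 \<alpha>) \<subseteq> set (walk_verts y q)" "set (walk_verts t1 \<beta>) \<subseteq> set (walk_verts y q)"
    "walk_sign \<sigma> \<alpha> * walk_sign \<sigma> \<beta> = walk_sign \<sigma> q"
proof -
  obtain A B where AB: "q = A @ B" "walk_end y A = t1" using walk_split_at_vertex[OF t(1)] by blast
  define q' where "q' = B @ A"
  have wq': "walk S t1 q'" "walk_end t1 q' = t1" using q(1,2) AB unfolding q'_def by auto
  have tlq': "tl (walk_verts t1 q') = tl (walk_verts t1 B) @ tl (walk_verts y A)"
    unfolding q'_def using q(2) AB by (simp add: tl_walk_verts_append)
  have tlq: "tl (walk_verts y q) = tl (walk_verts y A) @ tl (walk_verts t1 B)" using AB by (simp add: tl_walk_verts_append)
  have dq': "distinct (tl (walk_verts t1 q'))" using q(3) tlq tlq' by auto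
  have sq': "set (walk_verts t1 q') = set (walk_verts y q)"
    using AB q(2) unfolding q'_def by (auto simp: set_walk_verts_append)
  have t2q': "t2 \<in> set (walk_verts t1 q')" using t(2) sq' by simp
  obtain \<alpha> \<gamma> where ag: "q' = \<alpha> @ \<gamma>" "walk_end t1 \<alpha> = t2"
    using walk_split_at_vertex[OF t2q'] by blast
  have ane: "\<alpha> \<noteq> []" using ag t(3) by auto
  have gne: "\<gamma> \<noteq> []" using ag wq'(2) t(3) by auto
  have wa: "walk S t1 \<alpha>" "walk S t2 \<gamma>" "walk_end t2 \<gamma> = t1" using wq' ag by auto
  have tl2: "tl (walk_verts t1 q') = tl (walk_verts t1 \<alpha>) @ tl (walk_verts t2 \<gamma>)"
    using ag by (simp add: tl_walk_verts_append)
  have t1g: "t1 \<in> set (tl (walk_verts t2 \<gamma>))"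
    using last_tl_walk_verts[OF gne, of t2] tl_walk_verts_not_Nil[OF gne, of t2] wa(3)
    by (metis last_in_set)
  have t2a: "t2 \<in> set (tl (walk_verts t1 \<alpha>))"
    using last_tl_walk_verts[OF ane, of t1] tl_walk_verts_not_Nil[OF ane, of t1] ag(2)
    by (metis last_in_set)
  have dA: "distinct (walk_verts t1 \<alpha>)"
    using dq' tl2 t1g walk_verts_eq_Cons_tl[of t1 \<alpha>] by (metis distinct.simps(2) distinct_append disjoint_iff)
  have dG: "distinct (walk_verts t2 \<gamma>)"
    using dq' tl2 t2a walk_verts_eq_Cons_tl[of t2 \<gamma>] by (metis distinct.simps(2) distinct_append disjoint_iff)
  note rg = walk_rev[OF wa(2), unfolded wa(3)]
  have s1: "set (walk_verts t1 \<alpha>) \<subseteq> set (walk_verts y q)" "set (walk_verts t2 \<gamma>) \<subseteq> set (walk_verts y q)"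
    using sq' ag set_walk_verts_append[of t1 \<alpha> \<gamma>] by auto
  have "walk_sign \<sigma> (B @ A) = walk_sign \<sigma> (\<alpha> @ \<gamma>)" using ag unfolding q'_def by simp
  then have "walk_sign \<sigma> \<alpha> * walk_sign \<sigma> (rev \<gamma>) = walk_sign \<sigma> q"
    using AB by (simp add: mult.commute)
  moreover have "distinct (walk_verts t1 (rev \<gamma>))" using rg dG by simp
  moreover have "set (walk_verts t1 (rev \<gamma>)) \<subseteq> set (walk_verts y q)" using rg s1 by simp
  ultimately show thesis using that[of \<alpha> "rev \<gamma>"] wa ag(2) rg dA s1 by simp
qed

lemma theta_paths:
  assumes P: "path S u1 P" "walk_end u1 P = u2" and R: "path S u3 R" "walk_end u3 R = u1"
    and sig: "\<forall>e\<in>S. \<sigma> e \<in> {1, -1}"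
  obtains X13 X23 where "path S u1 X13" "walk_end u1 X13 = u3" "path S u2 X23" "walk_end u2 X23 = u3"
    "walk_sign \<sigma> X13 * walk_sign \<sigma> X23 = walk_sign \<sigma> P"
proof -
  have "walk_end u3 R \<in> set (walk_verts u1 P)" using R(2) by simp
  from walk_first_hit[OF this] obtain R1 bs where R1: "R = R1 @ bs" "walk_end u3 R1 \<in> set (walk_verts u1 P)"
    "set (butlast (walk_verts u3 R1)) \<inter> set (walk_verts u1 P) = {}" by blast
  define w where "w = walk_end u3 R1"
  have pR1: "path S u3 R1" using R(1) R1(1) by (simp add: distinct_walk_verts_append_iff)
  from walk_split_at_vertex[OF R1(2)] obtain P1 P2 where P12: "P = P1 @ P2" "walk_end u1 P1 = w"
    unfolding w_def by blast
  have pP: "path S u1 P1" "path S w P2" "walk_end w P2 = u2"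
    using P P12 by (auto simp: distinct_walk_verts_append_iff)
  have setR1: "set (walk_verts u3 R1) = insert w (set (butlast (walk_verts u3 R1)))"
    unfolding w_def by (subst walk_verts_snoc_end) simp
  have "set (walk_verts u1 P) = set (walk_verts u1 P1) \<union> set (walk_verts w P2)"
    using set_walk_verts_append[of u1 P1 P2] P12 by simp
  then have meet: "set (walk_verts u1 P1) \<inter> set (walk_verts u3 R1) = {w}"
    "set (walk_verts w P2) \<inter> set (walk_verts u3 R1) = {w}"
    using R1(3) setR1 P12(2) walk_end_in_walk_verts[of u1 P1] start_in_walk_verts[of w P2] by auto
  note rR1 = path_rev[OF pR1, folded w_def]
  note rP2 = path_rev[OF pP(2), unfolded pP(3)]
  show thesis
  proof (rule that)
    show "path S u1 (P1 @ rev R1)" "walk_end u1 (P1 @ rev R1) = u3"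
      using pP(1) rR1 meet(1) P12(2) by (auto simp: distinct_walk_verts_append_iff)
    show "path S u2 (rev P2 @ rev R1)" "walk_end u2 (rev P2 @ rev R1) = u3"
      using rP2 rR1 meet(2) by (auto simp: distinct_walk_verts_append_iff)
    have "walk_sign \<sigma> R1 \<in> {1, -1}"
      using walk_sign_pm1[of R1 \<sigma>] walk_edges_subset[OF conjunct1[OF pR1]] sig by blast
    then have "walk_sign \<sigma> R1 * walk_sign \<sigma> R1 = 1" by auto
    then show "walk_sign \<sigma> (P1 @ rev R1) * walk_sign \<sigma> (rev P2 @ rev R1) = walk_sign \<sigma> P"
      using P12(1) by (simp add: algebra_simps)
  qed
qed

text \<open>The legs \<open>L\<close>, \<open>M\<close> form a fan from \<open>p\<close> to \<open>T\<close>; \<open>B\<close> leads back to the vertex the fan is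
  wanted at, and the fan lemma shortens \<open>B\<close> to \<open>[]\<close>.\<close>
definition tripod :: "'e set \<Rightarrow> 'v set \<Rightarrow> 'v \<Rightarrow> 'e list \<Rightarrow> 'e list \<Rightarrow> 'e list \<Rightarrow> bool" where
  "tripod S T p B L M \<longleftrightarrow> path S p B \<and> path S p L \<and> path S p M \<and> L \<noteq> [] \<and> M \<noteq> [] \<and>
     walk_end p L \<in> T \<and> walk_end p M \<in> T \<and> set (walk_verts p B) \<inter> T = {} \<and>
     set (butlast (walk_verts p L)) \<inter> T = {} \<and> set (butlast (walk_verts p M)) \<inter> T = {} \<and>
     set (walk_verts p B) \<inter> set (walk_verts p L) = {p} \<and>
     set (walk_verts p B) \<inter> set (walk_verts p M) = {p} \<and>
     set (walk_verts p L) \<inter> set (walk_verts p M) = {p}"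

lemma tripod_swap: "tripod S T p B L M \<Longrightarrow> tripod S T p B M L"
  unfolding tripod_def by blast

lemma tripod_reroute:
  assumes tri: "tripod S T p (B1 @ B2) L M" and B1: "B1 \<noteq> []"
    and D: "path S (walk_end p B1) D" "walk_end (walk_end p B1) D = y"
      "set (butlast (walk_verts (walk_end p B1) D)) \<inter> T = {}"
      "set (walk_verts (walk_end p B1) D) \<inter> set (walk_verts p (B1 @ B2)) = {walk_end p B1}"
      "set (walk_verts (walk_end p B1) D) \<inter> set (walk_verts p M) = {}"
    and L2: "path S y L2" "walk_end y L2 \<in> T" "set (butlast (walk_verts y L2)) \<inter> T = {}"
      "set (walk_verts y L2) \<inter> (set (walk_verts p (B1 @ B2)) \<union> set (walk_verts p M)) = {}"
      "set (walk_verts (walk_end p B1) D) \<inter> set (walk_verts y L2) = {y}"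
  shows "tripod S T (walk_end p B1) B2 (D @ L2) (rev B1 @ M)"
proof -
  define d where "d = walk_end p B1"
  have B: "path S p B1" "path S d B2" "set (walk_verts p B1) \<inter> set (walk_verts d B2) = {d}"
    using tri unfolding tripod_def d_def by (auto simp: distinct_walk_verts_append_iff)
  have setB: "set (walk_verts p (B1 @ B2)) = set (walk_verts p B1) \<union> set (walk_verts d B2)"
    unfolding d_def by (rule set_walk_verts_append)
  have "d \<noteq> p" using B(1) B1 distinct_closed_walk_Nil unfolding d_def by metis
  have "d \<noteq> y" using L2(4) setB start_in_walk_verts[of y L2] walk_end_in_walk_verts[of p B1]
    unfolding d_def by blast
  then have "D \<noteq> []" using D(2) unfolding d_def by auto
  note rB1 = path_rev[OF B(1), folded d_def]
  have path_L: "path S d (D @ L2)" "walk_end d (D @ L2) = walk_end y L2"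
    using D(1,2) L2(1) L2(5) unfolding d_def[symmetric] by (auto simp: distinct_walk_verts_append_iff)
  have BM: "set (walk_verts p B1) \<inter> set (walk_verts p M) = {p}"
    using tri setB unfolding tripod_def by auto
  have path_M: "path S d (rev B1 @ M)" "walk_end d (rev B1 @ M) = walk_end p M"
    using rB1 BM tri unfolding tripod_def by (auto simp: distinct_walk_verts_append_iff)
  have sets: "set (walk_verts d (D @ L2)) = set (walk_verts d D) \<union> set (walk_verts y L2)"
    "set (walk_verts d (rev B1 @ M)) = set (walk_verts p B1) \<union> set (walk_verts p M)"
    "set (butlast (walk_verts d (D @ L2))) = set (butlast (walk_verts d D)) \<union> set (butlast (walk_verts y L2))"
    using D(2) rB1 unfolding d_def[symmetric] by (simp_all add: set_walk_verts_append butlast_walk_verts_append)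
  have "set (tl (walk_verts p B1)) \<subseteq> set (walk_verts p B1)"
    by (metis walk_verts_eq_Cons_tl set_subset_Cons)
  then have "set (butlast (walk_verts d (rev B1 @ M))) \<subseteq> set (walk_verts p B1) \<union> set (butlast (walk_verts p M))"
    using rB1(2,3) by (auto simp: butlast_walk_verts_append)
  note sets = sets this
  have tri': "M \<noteq> []" "walk_end p M \<in> T" "set (walk_verts p (B1 @ B2)) \<inter> T = {}"
    "set (butlast (walk_verts p M)) \<inter> T = {}" "set (walk_verts p (B1 @ B2)) \<inter> set (walk_verts p M) = {p}"
    using tri unfolding tripod_def by auto
  have ins: "p \<in> set (walk_verts p B1)" "d \<in> set (walk_verts p B1)" "d \<in> set (walk_verts d B2)"
    "d \<in> set (walk_verts d D)" unfolding d_def by simp_all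
  have "set (walk_verts d B2) \<inter> set (walk_verts d (D @ L2)) = {d}"
    unfolding sets(1) using D(4) L2(4) setB ins unfolding d_def[symmetric] by blast
  moreover have "set (walk_verts d B2) \<inter> set (walk_verts d (rev B1 @ M)) = {d}"
  proof -
    have "p \<notin> set (walk_verts d B2)" using B(3) ins(1) \<open>d \<noteq> p\<close> by (metis IntI singletonD)
    then have "set (walk_verts d B2) \<inter> set (walk_verts p M) = {}" using tri'(5) setB by auto
    then show ?thesis unfolding sets(2) using B(3) by auto
  qed
  moreover have "set (walk_verts d (D @ L2)) \<inter> set (walk_verts d (rev B1 @ M)) = {d}"
    unfolding sets(1,2) using D(4,5) L2(4) setB ins unfolding d_def[symmetric] by blast
  moreover have "set (butlast (walk_verts d (D @ L2))) \<inter> T = {}"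
    "set (butlast (walk_verts d (rev B1 @ M))) \<inter> T = {}" "set (walk_verts d B2) \<inter> T = {}"
    using sets(3,4) D(3) L2(3) tri'(3,4) setB unfolding d_def[symmetric] by auto
  ultimately show ?thesis
    unfolding tripod_def d_def[symmetric] using path_L path_M B(2) \<open>D \<noteq> []\<close> tri'(1,2) L2(2) by simp
qed

lemma tripod_reroute_along_leg:
  assumes tri: "tripod S T p (B1 @ B2) L M" and B1: "B1 \<noteq> []"
    and D: "path S (walk_end p B1) D" "walk_end (walk_end p B1) D = y"
      "set (butlast (walk_verts (walk_end p B1) D)) \<inter> T = {}"
      "set (walk_verts (walk_end p B1) D) \<inter> set (walk_verts p (B1 @ B2)) = {walk_end p B1}"
      "set (walk_verts (walk_end p B1) D) \<inter> (set (walk_verts p L) \<union> set (walk_verts p M)) \<subseteq> {y}"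
    and y: "y \<in> set (walk_verts p L)" "y \<noteq> p"
  shows "\<exists>L2. tripod S T (walk_end p B1) B2 (D @ L2) (rev B1 @ M)"
proof -
  obtain L1 L2 where L12: "L = L1 @ L2" "walk_end p L1 = y" using walk_split_at_vertex[OF y(1)] by blast
  have L: "path S p L" "walk_end p L \<in> T" "set (butlast (walk_verts p L)) \<inter> T = {}"
    "set (walk_verts p (B1 @ B2)) \<inter> set (walk_verts p L) = {p}"
    "set (walk_verts p L) \<inter> set (walk_verts p M) = {p}"
    using tri unfolding tripod_def by auto
  have L2: "path S y L2" "set (walk_verts p L1) \<inter> set (walk_verts y L2) = {y}"
    using L(1) L12 by (auto simp: distinct_walk_verts_append_iff)
  have "p \<notin> set (walk_verts y L2)" using L2(2) y(2) start_in_walk_verts[of p L1] by (metis IntI singletonD)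
  moreover have "set (walk_verts y L2) \<subseteq> set (walk_verts p L)"
    using L12 set_walk_verts_append[of p L1 L2] by auto
  ultimately have "set (walk_verts y L2) \<inter> (set (walk_verts p (B1 @ B2)) \<union> set (walk_verts p M)) = {}"
    using L(4,5) by auto
  moreover have "y \<notin> set (walk_verts p M)" using y L(5) by auto
  then have "set (walk_verts (walk_end p B1) D) \<inter> set (walk_verts p M) = {}" using D(5) by auto
  moreover have "set (walk_verts (walk_end p B1) D) \<inter> set (walk_verts y L2) = {y}"
    using D(2,5) \<open>set (walk_verts y L2) \<subseteq> set (walk_verts p L)\<close> by auto
  moreover have "set (butlast (walk_verts y L2)) \<inter> T = {}"
    using L(3) butlast_walk_verts_suffix[of p L1 L2] L12 by auto
  moreover have "walk_end y L2 \<in> T" using L(2) L12 by simp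
  ultimately have "tripod S T (walk_end p B1) B2 (D @ L2) (rev B1 @ M)"
    using tripod_reroute[OF tri B1 D(1-4)] L2(1) by blast
  then show ?thesis by blast
qed

lemma tripod_reroute_to_target:
  assumes tri: "tripod S T p (B1 @ B2) L M" and B1: "B1 \<noteq> []"
    and D: "path S (walk_end p B1) D" "walk_end (walk_end p B1) D = y"
      "set (butlast (walk_verts (walk_end p B1) D)) \<inter> T = {}"
      "set (walk_verts (walk_end p B1) D) \<inter> set (walk_verts p (B1 @ B2)) = {walk_end p B1}"
      "set (walk_verts (walk_end p B1) D) \<inter> (set (walk_verts p L) \<union> set (walk_verts p M)) \<subseteq> {y}"
    and y: "y \<in> T" "y \<notin> set (walk_verts p (B1 @ B2)) \<union> set (walk_verts p L) \<union> set (walk_verts p M)"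
  shows "tripod S T (walk_end p B1) B2 D (rev B1 @ M)"
proof -
  have "set (walk_verts (walk_end p B1) D) \<inter> set (walk_verts p M) = {}" using D(5) y(2) by auto
  moreover have "y \<in> set (walk_verts (walk_end p B1) D)" using D(2) walk_end_in_walk_verts by metis
  ultimately show ?thesis using tripod_reroute[OF tri B1 D(1-4), of "[]"] y by auto
qed

lemma tripod_fan_ends_distinct:
  assumes "tripod S T v [] L M"
  shows "walk_end v L \<noteq> walk_end v M"
proof -
  have "v \<notin> T" "walk_end v L \<in> T" "walk_end v L \<in> set (walk_verts v L)"
    "set (walk_verts v L) \<inter> set (walk_verts v M) = {v}"
    using assms unfolding tripod_def by auto
  then show ?thesis by (metis IntI singletonD walk_end_in_walk_verts)
qed

lemma closed_walk_through_tripod: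
  assumes tri: "tripod S T v [] L M"
    and \<gamma>: "path S (walk_end v L) \<gamma>" "walk_end (walk_end v L) \<gamma> = walk_end v M"
      "set (walk_verts (walk_end v L) \<gamma>) \<subseteq> T"
  shows "walk S v (L @ \<gamma> @ rev M) \<and> walk_end v (L @ \<gamma> @ rev M) = v
    \<and> distinct (tl (walk_verts v (L @ \<gamma> @ rev M)))"
proof -
  let ?t1 = "walk_end v L"
  have L: "path S v L" "set (butlast (walk_verts v L)) \<inter> T = {}"
    and M: "path S v M" "set (butlast (walk_verts v M)) \<inter> T = {}"
    and disj: "set (walk_verts v L) \<inter> set (walk_verts v M) = {v}"
    using tri unfolding tripod_def by auto
  note r = walk_rev[OF conjunct1[OF M(1)]]
  have "walk S v (L @ \<gamma> @ rev M)" "walk_end v (L @ \<gamma> @ rev M) = v"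
    using L(1) \<gamma>(1,2) r by auto
  moreover have "tl (walk_verts v (L @ \<gamma> @ rev M))
      = tl (walk_verts v L) @ tl (walk_verts ?t1 \<gamma>) @ rev (butlast (walk_verts v M))"
    using r \<gamma>(2) by (simp add: tl_walk_verts_append tl_rev)
  moreover have "distinct (tl (walk_verts v L) @ tl (walk_verts ?t1 \<gamma>) @ rev (butlast (walk_verts v M)))"
  proof -
    obtain l1 where l1: "walk_verts v L = v # l1" by (metis walk_verts_eq_Cons_tl)
    obtain lg where lg: "walk_verts ?t1 \<gamma> = ?t1 # lg" by (metis walk_verts_eq_Cons_tl)
    have "set (walk_verts v L) \<inter> T \<subseteq> {?t1}"
      using L(2) by (subst walk_verts_snoc_end) auto
    moreover have "set (butlast (walk_verts v M)) \<subseteq> set (walk_verts v M)"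
      by (rule in_set_butlastD[THEN subsetI])
    ultimately show ?thesis
      using L(1) M \<gamma>(1,3) disj l1 lg by (auto simp: distinct_butlast)
  qed
  ultimately show ?thesis by simp
qed

end

lemma deg2_eq_card_incident:
  assumes "finite D" "\<forall>e\<in>D. fst (ends e) \<noteq> snd (ends e)"
  shows "deg2 ends D y = card {e\<in>D. incident ends y e}"
proof -
  have "{e\<in>D. incident ends y e} = {e\<in>D. fst (ends e) = y} \<union> {e\<in>D. snd (ends e) = y}"
    by (auto simp: incident_def)
  moreover have "{e\<in>D. fst (ends e) = y} \<inter> {e\<in>D. snd (ends e) = y} = {}" using assms(2) by auto
  ultimately show ?thesis unfolding deg2_def using assms(1) by (simp add: card_Un_disjoint)
qed

lemma card_incident_circle:
  assumes "circle ends V E C D" "finite D" "\<forall>e\<in>D. fst (ends e) \<noteq> snd (ends e)" "v \<in> C"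
  shows "card {e\<in>D. incident ends v e} = 2"
  using assms deg2_eq_card_incident[of D ends v] unfolding circle_def by auto

locale nonseparable_graph =
  fixes ends :: "'e \<Rightarrow> 'v \<times> 'v" and W :: "'v set" and F :: "'e set"
  assumes finW: "finite W" and finF: "finite F"
    and endsW: "\<forall>e\<in>F. fst (ends e) \<in> W \<and> snd (ends e) \<in> W"
    and loopless: "\<forall>e\<in>F. fst (ends e) \<noteq> snd (ends e)"
    and conn: "connected_g ends W F"
    and nocut: "\<nexists>x. cutpoint ends W F x"
begin

lemma walk_verts_in_W: "walk ends S x es \<Longrightarrow> S \<subseteq> F
    \<Longrightarrow> x \<in> W \<Longrightarrow> set (walk_verts ends x es) \<subseteq> W"
  using walk_verts_subset_ends[of ends S x es] walk_edges_subset[of ends S x es] endsW by fastforce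

lemma walk_start_in_W: "walk ends F x es \<Longrightarrow> es \<noteq> [] \<Longrightarrow> x \<in> W"
  using endsW by (cases es) (auto simp: incident_def)

lemma other_end_in_W_minus: "e \<in> F \<Longrightarrow> incident ends v e
    \<Longrightarrow> other_end ends v e \<in> W - {v}"
  using endsW loopless by (auto simp: incident_def other_end_def)

lemma closed_path_circle:
  assumes w: "walk ends F x c" "walk_end ends x c = x" "c \<noteq> []" "distinct (tl (walk_verts ends x c))"
    "distinct c" "x \<in> W"
  shows "circle ends W F (set (walk_verts ends x c)) (set c)"
proof -
  have cF: "set c \<subseteq> F" using walk_edges_subset[OF w(1)] .
  have sub: "subgraph ends (set (walk_verts ends x c)) (set c) W F"
    unfolding subgraph_def using walk_verts_in_W[OF w(1) _ w(6)] cF walk_edge_ends_in_verts[OF w(1)] by auto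
  have sym: "sym (adj ends (set c))" by (auto simp: sym_def adj_def)
  have "(a, b) \<in> (adj ends (set c))\<^sup>*" if "a \<in> set (walk_verts ends x c)" "b \<in> set (walk_verts ends x c)" for a b
  proof -
    have "(x, a) \<in> (adj ends (set c))\<^sup>*" "(x, b) \<in> (adj ends (set c))\<^sup>*"
      using walk_rtrancl_adj[OF w(1)] that by auto
    moreover have "(a, x) \<in> (adj ends (set c))\<^sup>*" using calculation(1) sym_rtrancl[OF sym]
      by (auto simp: sym_def)
    ultimately show ?thesis by (meson rtrancl_trans)
  qed
  then have con: "connected_g ends (set (walk_verts ends x c)) (set c)" unfolding connected_g_def by auto
  have lc: "\<forall>e\<in>set c. fst (ends e) \<noteq> snd (ends e)" using cF loopless by auto
  have deg: "deg2 ends (set c) y = 2" if "y \<in> set (walk_verts ends x c)" for y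
  proof -
    have "deg2 ends (set c) y
        = length (filter (\<lambda>e. fst (ends e) = y) c) + length (filter (\<lambda>e. snd (ends e) = y) c)"
      unfolding deg2_def using distinct_length_filter[OF w(5)] by (metis Collect_conj_eq Int_commute Collect_mem_eq)
    also have "\<dots> = length (filter (incident ends y) c)" using length_filter_fst_snd[OF lc] .
    also have "\<dots> = count_list (butlast (walk_verts ends x c)) y + count_list (tl (walk_verts ends x c)) y"
      using length_filter_incident[OF w(1) loopless] .
    also have "\<dots> = 2 * count_list (tl (walk_verts ends x c)) y" using closed_walk_count_list[OF w(2,3)] by simp
    also have "\<dots> = 2"
    proof -
      have "y \<in> set (tl (walk_verts ends x c))"
      proof -
        obtain bl where "walk_verts ends x c = x # bl @ [x]" using closed_walk_verts[OF w(2,3)] by blast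
        then show ?thesis using that by auto
      qed
      then show ?thesis using count_list_distinct[OF w(4)] by simp
    qed
    finally show ?thesis .
  qed
  show ?thesis using sub con deg unfolding circle_def by auto
qed

lemma circle_of_closed_walk:
  assumes "walk ends F x c" "walk_end ends x c = x" "distinct (tl (walk_verts ends x c))" "2 < length c" "x \<in> W"
  shows "circle ends W F (set (walk_verts ends x c)) (set c) \<and> distinct c"
proof -
  have "distinct c" using closed_walk_distinct_edges[OF assms(1-4)] loopless by blast
  moreover have "c \<noteq> []" using assms(4) by auto
  ultimately show ?thesis using closed_path_circle[OF assms(1,2) _ assms(3) _ assms(5)] by blast
qed

lemma ncomp_eq_1: "ncomp ends W F = 1"
proof -
  have "reach ends W F = W \<times> W" using conn unfolding reach_def connected_g_def by auto
  moreover have "W // (W \<times> W) = {W}" using conn unfolding connected_g_def quotient_def by auto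
  ultimately show ?thesis unfolding ncomp_def by simp
qed

lemma connected_minus_vertex: assumes "x \<in> W" "a \<in> W - {x}" "b \<in> W - {x}"
  shows "(a, b) \<in> (adj ends {e\<in>F. \<not> incident ends x e})\<^sup>*"
proof (rule ccontr)
  assume nab: "(a, b) \<notin> (adj ends {e\<in>F. \<not> incident ends x e})\<^sup>*"
  let ?W = "W - {x}" and ?F = "{e\<in>F. \<not> incident ends x e}"
  let ?R = "reach ends ?W ?F"
  have fin: "finite (?W // ?R)" by (rule finite_quotient) (use finW in \<open>auto simp: reach_def\<close>)
  have A: "?R `` {a} \<in> ?W // ?R" "?R `` {b} \<in> ?W // ?R" using assms by (auto simp: quotient_def)
  have "b \<in> ?R `` {b}" "b \<notin> ?R `` {a}" using assms nab by (auto simp: reach_def)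
  then have "?R `` {a} \<noteq> ?R `` {b}" by blast
  then have "card {?R `` {a}, ?R `` {b}} = 2" by simp
  moreover have "card {?R `` {a}, ?R `` {b}} \<le> card (?W // ?R)" using A fin by (intro card_mono) auto
  ultimately have "ncomp ends ?W ?F > ncomp ends W F" using ncomp_eq_1 unfolding ncomp_def by simp
  then have "cutpoint ends W F x" using assms unfolding cutpoint_def by simp
  then show False using nocut by blast
qed

lemma path_avoiding_vertex: assumes "x \<in> W" "a \<in> W - {x}" "b \<in> W - {x}"
  shows "\<exists>ps. walk ends {e\<in>F. \<not> incident ends x e} a ps
      \<and> walk_end ends a ps = b \<and> distinct (walk_verts ends a ps)
    \<and> set (walk_verts ends a ps) \<subseteq> W - {x}"
proof -
  let ?F = "{e\<in>F. \<not> incident ends x e}"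
  obtain es where es: "walk ends ?F a es" "walk_end ends a es = b"
    using rtrancl_adj_walk[OF connected_minus_vertex[OF assms]] by blast
  obtain ps where ps: "walk ends ?F a ps" "walk_end ends a ps = b" "distinct (walk_verts ends a ps)"
    using walk_to_path[OF es(1)] es(2) by metis
  have "set (walk_verts ends a ps) \<subseteq> W" using walk_verts_in_W[OF ps(1)] assms by auto
  moreover have "x \<notin> set (walk_verts ends a ps)" using walk_avoids_unincident_vertex[OF ps(1)] assms by auto
  ultimately show ?thesis using ps by blast
qed

lemma path_between: assumes "a \<in> W" "b \<in> W"
  shows "\<exists>ps. walk ends F a ps \<and> walk_end ends a ps = b \<and> distinct (walk_verts ends a ps)"
proof -
  have "(a, b) \<in> (adj ends F)\<^sup>*" using conn assms unfolding connected_g_def by auto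
  from rtrancl_adj_walk[OF this] obtain es where es: "walk ends F a es" "walk_end ends a es = b" by blast
  then show ?thesis using walk_to_path[OF es(1)] by metis
qed

lemma detour_avoiding_vertex:
  assumes "p \<in> W" "X \<union> Y \<subseteq> W - {p}" "X \<inter> Y = {}" "x \<in> X" "z \<in> Y"
  obtains d D where "d \<in> X" "path ends F d D" "walk_end ends d D \<in> Y" "p \<notin> set (walk_verts ends d D)"
    "set (walk_verts ends d D) \<inter> X = {d}" "set (walk_verts ends d D) \<inter> Y = {walk_end ends d D}"
proof -
  obtain ps where ps: "path ends {e\<in>F. \<not> incident ends p e} x ps" "walk_end ends x ps = z"
      "set (walk_verts ends x ps) \<subseteq> W - {p}"
    using path_avoiding_vertex[OF assms(1), of x z] assms(2,4,5) by blast
  obtain d D where D: "d \<in> X" "path ends {e\<in>F. \<not> incident ends p e} d D" "walk_end ends d D \<in> Y"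
    "set (walk_verts ends d D) \<subseteq> set (walk_verts ends x ps)"
    "set (walk_verts ends d D) \<inter> X = {d}" "set (walk_verts ends d D) \<inter> Y = {walk_end ends d D}"
    using path_segment_between[OF ps(1) assms(4) _ assms(3)] ps(2) assms(5) by blast
  show thesis
  proof (rule that[OF D(1) _ D(3) _ D(5,6)])
    show "path ends F d D" using walk_mono[OF conjunct1[OF D(2)]] walk_edges_subset[OF conjunct1[OF D(2)]] D(2) by blast
    show "p \<notin> set (walk_verts ends d D)" using D(4) ps(3) by blast
  qed
qed

lemma tripod_step:
  assumes tri: "tripod ends F T p B L M" and "B \<noteq> []" and TW: "T \<subseteq> W" and pW: "p \<in> W"
  shows "\<exists>p' B' L' M'. tripod ends F T p' B' L' M'
      \<and> walk_end ends p' B' = walk_end ends p B \<and> length B' < length B"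
proof -
  \<comment> \<open>a path avoiding \<open>p\<close> from the far part of \<open>B\<close> to the rest of the tripod\<close>
  define X where "X = set (walk_verts ends p B) - {p}"
  define Y where "Y = (set (walk_verts ends p L) \<union> set (walk_verts ends p M) \<union> T) - {p}"
  have paths: "path ends F p B" "path ends F p L" "path ends F p M" and "L \<noteq> []" "walk_end ends p L \<in> T"
    and BT: "set (walk_verts ends p B) \<inter> T = {}"
    and legs: "set (walk_verts ends p B) \<inter> set (walk_verts ends p L) = {p}"
      "set (walk_verts ends p B) \<inter> set (walk_verts ends p M) = {p}"
      "set (walk_verts ends p L) \<inter> set (walk_verts ends p M) = {p}"
    using tri unfolding tripod_def by auto
  have "p \<notin> T" using BT by (metis IntI empty_iff start_in_walk_verts)
  have "X \<union> Y \<subseteq> W - {p}"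
    using walk_verts_in_W[OF _ _ pW] paths TW unfolding X_def Y_def by blast
  moreover have XY: "X \<inter> Y = {}" using legs BT unfolding X_def Y_def by auto
  moreover have "walk_end ends p B \<in> X"
    using distinct_closed_walk_Nil paths(1) \<open>B \<noteq> []\<close> unfolding X_def by fastforce
  moreover have "walk_end ends p L \<in> Y"
    using \<open>walk_end ends p L \<in> T\<close> \<open>p \<notin> T\<close> unfolding Y_def by auto
  ultimately obtain d D where D: "d \<in> X" "path ends F d D" "walk_end ends d D \<in> Y" "p \<notin> set (walk_verts ends d D)"
    "set (walk_verts ends d D) \<inter> X = {d}" "set (walk_verts ends d D) \<inter> Y = {walk_end ends d D}"
    by (rule detour_avoiding_vertex[OF pW])
  define y where "y = walk_end ends d D"
  have "d \<in> set (walk_verts ends p B)" "d \<noteq> p" using D(1) unfolding X_def by auto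
  then obtain B1 B2 where B12: "B = B1 @ B2" "walk_end ends p B1 = d" "B1 \<noteq> []"
    by (metis append_Nil walk_end.simps(1) walk_split_at_vertex)
  have DB: "set (walk_verts ends d D) \<inter> set (walk_verts ends p (B1 @ B2)) = {d}"
    using D(1,4,5) B12(1) unfolding X_def by auto
  have DT: "set (butlast (walk_verts ends d D)) \<inter> T = {}"
    using set_butlast_walk_verts[OF conjunct2[OF D(2)]] D(4,6) unfolding Y_def by auto
  have DLM: "set (walk_verts ends d D)
      \<inter> (set (walk_verts ends p L) \<union> set (walk_verts ends p M)) \<subseteq> {y}"
    using D(4,6) unfolding Y_def y_def by auto
  have "y \<noteq> p" "y \<notin> set (walk_verts ends p B)" using D(3) XY unfolding X_def Y_def y_def by auto
  note D' = D(2)[folded B12(2)] y_def[folded B12(2), symmetric] DT[folded B12(2)] DB[folded B12(2)]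
  have shorter: "\<exists>p' B' L' M'. tripod ends F T p' B' L' M'
      \<and> walk_end ends p' B' = walk_end ends p B \<and> length B' < length B"
    if "tripod ends F T d B2 L' M'" for L' M'
    using that B12 by (intro exI[of _ d] exI[of _ B2] exI[of _ L'] exI[of _ M']) auto
  consider "y \<in> set (walk_verts ends p L)" | "y \<in> set (walk_verts ends p M)"
    | "y \<notin> set (walk_verts ends p L) \<union> set (walk_verts ends p M)" by blast
  then show ?thesis
  proof cases
    case 1
    with tripod_reroute_along_leg[OF tri[unfolded B12(1)] B12(3) D' DLM[folded B12(2)]] \<open>y \<noteq> p\<close>
    show ?thesis using shorter B12(2) by blast
  next
    case 2
    have "set (walk_verts ends d D) \<inter> (set (walk_verts ends p M) \<union> set (walk_verts ends p L)) \<subseteq> {y}"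
      using DLM by auto
    with tripod_reroute_along_leg[OF tripod_swap[OF tri[unfolded B12(1)]] B12(3) D'] 2 \<open>y \<noteq> p\<close>
    show ?thesis using shorter B12(2) by blast
  next
    case 3
    then have "y \<in> T" using D(3) unfolding y_def Y_def by auto
    with tripod_reroute_to_target[OF tri[unfolded B12(1)] B12(3) D' DLM[folded B12(2)]] 3 \<open>y \<notin> set (walk_verts ends p B)\<close>
    show ?thesis using shorter B12 by auto
  qed
qed

lemma tripod_init:
  assumes vW: "v \<in> W" and TW: "T \<subseteq> W" and vT: "v \<notin> T" and t: "t \<in> T" "t' \<in> T" "t \<noteq> t'"
  shows "\<exists>p B L M. tripod ends F T p B L M \<and> walk_end ends p B = v"
proof -
  obtain P where P: "path ends F v P" "walk_end ends v P = t" using path_between[OF vW] t(1) TW by blast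
  then obtain A bs where A: "P = A @ bs" "walk_end ends v A \<in> T" "set (butlast (walk_verts ends v A)) \<inter> T = {}"
    using walk_first_hit[of ends v P T] t(1) by blast
  define a where "a = walk_end ends v A"
  define X where "X = set (butlast (walk_verts ends v A))"
  have pathA: "path ends F v A" using P A(1) by (simp add: distinct_walk_verts_append_iff)
  have A_ne: "A \<noteq> []" using A(2) vT by auto
  have Xeq: "X = set (walk_verts ends v A) - {a}"
    unfolding X_def a_def by (rule set_butlast_walk_verts[OF conjunct2[OF pathA]])
  have "a \<in> set (walk_verts ends v A)" unfolding a_def by simp
  then have setA: "set (walk_verts ends v A) = insert a X" "a \<notin> X" using Xeq by auto
  have aW: "a \<in> W" using A(2) TW unfolding a_def by auto
  have "set (walk_verts ends v A) \<subseteq> W" using walk_verts_in_W[OF conjunct1[OF pathA] _ vW] by simp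
  then have "X \<union> (T - {a}) \<subseteq> W - {a}" using Xeq TW by auto
  moreover have "X \<inter> (T - {a}) = {}" using A(3) unfolding X_def by auto
  moreover have "v \<in> X" using butlast_walk_verts_Cons[OF A_ne, of ends v] unfolding X_def by simp
  moreover obtain z where "z \<in> T - {a}" using t by blast
  ultimately obtain d D where D: "d \<in> X" "path ends F d D" "walk_end ends d D \<in> T - {a}" "a \<notin> set (walk_verts ends d D)"
    "set (walk_verts ends d D) \<inter> X = {d}" "set (walk_verts ends d D) \<inter> (T - {a}) = {walk_end ends d D}"
    by (rule detour_avoiding_vertex[OF aW])
  have "d \<in> set (walk_verts ends v A)" using D(1) setA by auto
  from walk_split_at_vertex[OF this] obtain A1 A2 where A12: "A = A1 @ A2" "walk_end ends v A1 = d" by blast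
  have A1: "path ends F v A1" and A2: "path ends F d A2" "walk_end ends d A2 = a"
    and A1A2: "set (walk_verts ends v A1) \<inter> set (walk_verts ends d A2) = {d}"
    using pathA A12 unfolding a_def by (auto simp: distinct_walk_verts_append_iff)
  have "d \<noteq> a" using D(1) setA(2) by auto
  then have "A2 \<noteq> []" using A2(2) by auto
  have "walk_end ends d D \<noteq> d" using D(1,3) \<open>X \<inter> (T - {a}) = {}\<close> by auto
  then have "D \<noteq> []" by auto
  have setA12: "set (walk_verts ends v A) = set (walk_verts ends v A1) \<union> set (walk_verts ends d A2)"
    using set_walk_verts_append[of ends v A1 A2] A12 by simp
  have "a \<in> set (walk_verts ends d A2)" using A2(2) walk_end_in_walk_verts[of ends d A2] by simp
  then have "a \<notin> set (walk_verts ends v A1)" using A1A2 \<open>d \<noteq> a\<close> by (metis IntI singletonD)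
  then have A1X: "set (walk_verts ends v A1) \<subseteq> X" using setA12 setA(1) by auto
  have A2X: "set (walk_verts ends d A2) \<subseteq> insert a X" using setA12 setA(1) by auto
  have XT: "X \<inter> T = {}" using A(3) unfolding X_def .
  note rA1 = path_rev[OF A1, unfolded A12(2)]
  have "set (walk_verts ends d (rev A1)) \<inter> T = {}" using rA1(3) A1X XT by auto
  moreover have "set (butlast (walk_verts ends d A2)) \<inter> T = {}"
    using A(3) butlast_walk_verts_suffix[of ends v A1 A2] A12 by auto
  moreover have "set (butlast (walk_verts ends d D)) \<inter> T = {}"
    using set_butlast_walk_verts[OF conjunct2[OF D(2)]] D(4,6) by auto
  moreover have "set (walk_verts ends d (rev A1)) \<inter> set (walk_verts ends d A2) = {d}" using rA1(3) A1A2 by simp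
  moreover have "set (walk_verts ends d (rev A1)) \<inter> set (walk_verts ends d D) = {d}"
    using rA1(3) A1X D(5) A12(2) walk_end_in_walk_verts[of ends v A1] by auto
  moreover have "set (walk_verts ends d A2) \<inter> set (walk_verts ends d D) = {d}"
    using A2X D(4,5) by auto
  ultimately have "tripod ends F T d (rev A1) A2 D"
    unfolding tripod_def using rA1(1) A2 D(2,3) A(2) \<open>A2 \<noteq> []\<close> \<open>D \<noteq> []\<close>
      unfolding a_def by simp
  then show ?thesis using rA1(2) by blast
qed

lemma two_fan:
  assumes "v \<in> W" "T \<subseteq> W" "v \<notin> T" "t \<in> T" "t' \<in> T" "t \<noteq> t'"
  shows "\<exists>L M. tripod ends F T v [] L M"
proof -
  have "\<exists>L M. tripod ends F T (walk_end ends p B) [] L M" if "tripod ends F T p B L M" for p B L M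
    using that
  proof (induction "length B" arbitrary: p B L M rule: less_induct)
    case less
    show ?case
    proof (cases "B = []")
      case True
      then show ?thesis using less.prems by auto
    next
      case False
      have "p \<in> W" using walk_start_in_W[of p L] less.prems unfolding tripod_def by auto
      from tripod_step[OF less.prems False assms(2) this] less.hyps show ?thesis by metis
    qed
  qed
  then show ?thesis using tripod_init[OF assms] by blast
qed

lemma two_edges_at_vertex:
  assumes vW: "v \<in> W" and circ: "circle ends W F C D"
  shows "\<exists>e1 e2. e1 \<noteq> e2 \<and> e1 \<in> F
      \<and> e2 \<in> F \<and> incident ends v e1 \<and> incident ends v e2"
proof -
  have sub: "C \<subseteq> W" "D \<subseteq> F" "\<forall>e\<in>D. fst (ends e) \<in> C \<and> snd (ends e) \<in> C"
    and "C \<noteq> {}"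
    using circ unfolding circle_def subgraph_def connected_g_def by auto
  have deg: "card {e\<in>D. incident ends y e} = 2" if "y \<in> C" for y
    using card_incident_circle[OF circ _ _ that] sub(2) finF loopless finite_subset by blast
  obtain c where c: "c \<in> C" using \<open>C \<noteq> {}\<close> by blast
  have "{e\<in>D. incident ends c e} \<noteq> {}" using deg[OF c] by (metis card.empty zero_neq_numeral)
  then obtain e where "e \<in> D" "incident ends c e" by blast
  moreover from this have "fst (ends e) \<noteq> snd (ends e)" using sub(2) loopless by blast
  ultimately have c': "other_end ends c e \<in> C" "other_end ends c e \<noteq> c"
    using sub(3) by (auto simp: incident_def other_end_def)
  show ?thesis
  proof (cases "v \<in> C")
    case True
    then obtain a b where "{e\<in>D. incident ends v e} = {a, b}" "a \<noteq> b"
      using deg by (meson card_2_iff)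
    then show ?thesis using sub(2) by blast
  next
    case False
    obtain P where P: "walk ends F v P" "walk_end ends v P = c" using path_between[OF vW] c sub(1) by blast
    then obtain e1 P' where "P = e1 # P'" using False c by (cases P) auto
    then have e1: "e1 \<in> F" "incident ends v e1" using P(1) by auto
    define u1 where "u1 = other_end ends v e1"
    have u1: "u1 \<in> W - {v}" "incident ends u1 e1"
      using other_end_in_W_minus[OF e1] incident_other_end[OF e1(2)] unfolding u1_def by auto
    obtain w where w: "w \<in> C" "w \<noteq> u1" using c c' by blast
    then obtain Q where Q: "walk ends {e\<in>F. \<not> incident ends u1 e} v Q" "walk_end ends v Q = w"
      using path_avoiding_vertex[of u1 v w] u1 sub(1) False vW by blast
    then obtain e2 Q' where "Q = e2 # Q'" using False w(1) by (cases Q) auto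
    then have "e2 \<in> F" "incident ends v e2" "e1 \<noteq> e2" using Q(1) u1(2) by auto
    then show ?thesis using e1 by blast
  qed
qed

end

lemma switch_sign_incident:
  assumes "incident ends v e" "\<zeta> v = 1"
  shows "switch_sign ends \<sigma> \<zeta> e = \<sigma> e * \<zeta> (other_end ends v e)"
  using assms by (auto simp: switch_sign_def incident_def other_end_def)

lemma prod_comp_eq_prod_power_card:
  assumes "finite D" "finite C" "g ` D \<subseteq> C"
  shows "(\<Prod>e\<in>D. f (g e)) = (\<Prod>y\<in>C. f y ^ card {e\<in>D. g e = y})"
proof -
  have "(\<Prod>e\<in>D. f (g e)) = (\<Prod>y\<in>C. \<Prod>e\<in>{x \<in> D. g x = y}. f (g e))"
    by (rule prod.group[OF assms, symmetric])
  also have "\<dots> = (\<Prod>y\<in>C. f y ^ card {e\<in>D. g e = y})"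
    by (intro prod.cong refl) simp
  finally show ?thesis .
qed

lemma prod_endpoints_deg2:
  assumes "finite D" "finite C" "\<forall>e\<in>D. fst (ends e) \<in> C \<and> snd (ends e) \<in> C"
  shows "(\<Prod>e\<in>D. (f (fst (ends e)) * f (snd (ends e)) :: int)) = (\<Prod>y\<in>C. f y ^ deg2 ends D y)"
proof -
  have "(\<lambda>e. fst (ends e)) ` D \<subseteq> C" "(\<lambda>e. snd (ends e)) ` D \<subseteq> C" using assms(3) by auto
  from this[THEN prod_comp_eq_prod_power_card[OF assms(1,2)], of f]
  show ?thesis by (simp add: prod.distrib deg2_def power_add)
qed

lemma prod_switch_sign_circle:
  assumes circ: "circle ends V E C D" and fin: "finite C" "finite D" and \<zeta>: "\<forall>x. \<zeta> x \<in> {1, -1}"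
  shows "(\<Prod>e\<in>D. switch_sign ends \<sigma> \<zeta> e) = (\<Prod>e\<in>D. \<sigma> e)"
proof -
  have ends: "\<forall>e\<in>D. fst (ends e) \<in> C \<and> snd (ends e) \<in> C"
    and deg: "\<forall>y\<in>C. deg2 ends D y = 2"
    using circ unfolding circle_def subgraph_def by auto
  have "(\<Prod>e\<in>D. \<zeta> (fst (ends e)) * \<zeta> (snd (ends e))) = (\<Prod>y\<in>C. \<zeta> y ^ deg2 ends D y)"
    by (rule prod_endpoints_deg2[OF fin(2,1) ends])
  also have "\<dots> = 1"
    using deg \<zeta> by (intro prod.neutral) (metis insertE power2_minus power_one singletonD)
  finally show ?thesis
    by (simp add: switch_sign_def prod.distrib mult.commute mult.left_commute)
qed

lemma walk_sign_eq_if_same_end: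
  assumes closed: "\<forall>c. walk ends S u c \<and> walk_end ends u c = u \<longrightarrow> walk_sign \<sigma> c = 1"
    and sig: "\<forall>e\<in>S. \<sigma> e \<in> {1, -1}"
    and es: "walk ends S u es" and fs: "walk ends S u fs" "walk_end ends u es = walk_end ends u fs"
  shows "walk_sign \<sigma> es = walk_sign \<sigma> fs"
proof -
  have "walk ends S u (es @ rev fs)" "walk_end ends u (es @ rev fs) = u"
    using es fs walk_rev[OF fs(1)] by auto
  then have "walk_sign \<sigma> es * walk_sign \<sigma> fs = 1" using closed[rule_format, of "es @ rev fs"] by simp
  moreover have "walk_sign \<sigma> es \<in> {1, -1}" "walk_sign \<sigma> fs \<in> {1, -1}"
    using walk_sign_pm1[of es \<sigma>] walk_sign_pm1[of fs \<sigma>] walk_edges_subset[OF es] walk_edges_subset[OF fs(1)] sig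
    by blast+
  ultimately show ?thesis by auto
qed

lemma switching_of_balanced_walks:
  assumes reach: "\<forall>x\<in>Z. \<exists>es. walk ends S u es \<and> walk_end ends u es = x"
    and endsZ: "\<forall>e\<in>S. fst (ends e) \<in> Z"
    and closed: "\<forall>c. walk ends S u c \<and> walk_end ends u c = u \<longrightarrow> walk_sign \<sigma> c = 1"
    and sig: "\<forall>e\<in>S. \<sigma> e \<in> {1, -1}"
  obtains \<zeta> where "\<forall>x. \<zeta> x \<in> {1, -1}" "\<forall>e\<in>S. switch_sign ends \<sigma> \<zeta> e = 1"
    "\<And>es. walk ends S u es \<Longrightarrow> \<zeta> (walk_end ends u es) = walk_sign \<sigma> es"
proof -
  have pm: "walk_sign \<sigma> es \<in> {1, -1}" if "walk ends S x es" for x es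
    using walk_sign_pm1[of es \<sigma>] walk_edges_subset[OF that] sig by blast
  define \<zeta> where "\<zeta> x = (if \<exists>es. walk ends S u es \<and> walk_end ends u es = x
    then walk_sign \<sigma> (SOME es. walk ends S u es \<and> walk_end ends u es = x) else 1)" for x
  have \<zeta>_walk: "\<zeta> (walk_end ends u es) = walk_sign \<sigma> es" if "walk ends S u es" for es
  proof -
    define es' where "es' = (SOME es'. walk ends S u es' \<and> walk_end ends u es' = walk_end ends u es)"
    have ex: "\<exists>es'. walk ends S u es' \<and> walk_end ends u es' = walk_end ends u es" using that by blast
    then have es': "walk ends S u es'" "walk_end ends u es' = walk_end ends u es"
      unfolding es'_def by (metis (mono_tags, lifting) someI_ex)+
    have "walk_sign \<sigma> es' = walk_sign \<sigma> es" by (rule walk_sign_eq_if_same_end[OF closed sig es'(1) that es'(2)])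
    moreover have "\<zeta> (walk_end ends u es) = walk_sign \<sigma> es'" using ex unfolding \<zeta>_def es'_def by simp
    ultimately show ?thesis by simp
  qed
  have zpm: "\<zeta> x \<in> {1, -1}" for x
  proof (cases "\<exists>es. walk ends S u es \<and> walk_end ends u es = x")
    case True
    then obtain es where "walk ends S u es" "walk_end ends u es = x" by blast
    then show ?thesis using pm \<zeta>_walk[of es] by simp
  next
    case False
    then have "\<zeta> x = 1" unfolding \<zeta>_def by (rule if_not_P)
    then show ?thesis by simp
  qed
  have zsw: "switch_sign ends \<sigma> \<zeta> e = 1" if eS: "e \<in> S" for e
  proof -
    obtain es where es: "walk ends S u es" "walk_end ends u es = fst (ends e)"
      using reach endsZ eS by blast
    have "incident ends (fst (ends e)) e" "other_end ends (fst (ends e)) e = snd (ends e)"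
      by (auto simp: incident_def other_end_def)
    then have "walk ends S u (es @ [e])" "walk_end ends u (es @ [e]) = snd (ends e)"
      using es eS by auto
    then have "\<zeta> (snd (ends e)) = walk_sign \<sigma> es * \<sigma> e" using \<zeta>_walk[of "es @ [e]"] by simp
    moreover have "\<zeta> (fst (ends e)) = walk_sign \<sigma> es" using \<zeta>_walk[OF es(1)] es(2) by simp
    moreover have "walk_sign \<sigma> es * walk_sign \<sigma> es = 1" "\<sigma> e * \<sigma> e = 1"
      using pm[OF es(1)] sig eS by auto
    ultimately show ?thesis by (simp add: switch_sign_def algebra_simps)
  qed
  show ?thesis using zpm zsw by (intro that[OF _ _ \<zeta>_walk]) auto
qed

locale signed_nonseparable_graph = nonseparable_graph ends W F
  for ends :: "'e \<Rightarrow> 'v \<times> 'v" and W F +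
  fixes \<sigma> :: "'e \<Rightarrow> int"
  assumes sig: "\<forall>e\<in>F. \<sigma> e \<in> {1, -1}"
begin

definition circles_through_negative :: "'v \<Rightarrow> bool" where
  "circles_through_negative v \<longleftrightarrow> (\<forall>C D. circle ends W F C D \<and> v \<in> C \<longrightarrow> (\<Prod>e\<in>D. \<sigma> e) = -1)"

lemma walk_sign_square: "set es \<subseteq> F \<Longrightarrow> walk_sign \<sigma> es * walk_sign \<sigma> es = 1"
proof -
  assume "set es \<subseteq> F"
  then have "walk_sign \<sigma> es \<in> {1,-1}" using walk_sign_pm1[of es \<sigma>] sig by blast
  then show ?thesis by auto
qed

lemma sigma_square: "e \<in> F \<Longrightarrow> \<sigma> e * \<sigma> e = 1"
  using sig by auto

lemma circle_through_vertex:
  assumes vW: "v \<in> W" and g: "g1 \<in> F" "g2 \<in> F" "incident ends v g1" "incident ends v g2" "g1 \<noteq> g2"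
    and X: "walk ends {e\<in>F. \<not> incident ends v e} (other_end ends v g1) X"
      "walk_end ends (other_end ends v g1) X = other_end ends v g2" "distinct (walk_verts ends (other_end ends v g1) X)"
  shows "circle ends W F (insert v (set (walk_verts ends (other_end ends v g1) X))) (insert g1 (insert g2 (set X)))
    \<and> (\<Prod>e\<in>insert g1 (insert g2 (set X)). \<sigma> e) = \<sigma> g1 * \<sigma> g2 * walk_sign \<sigma> X"
proof -
  define u1 where "u1 = other_end ends v g1"
  define u2 where "u2 = other_end ends v g2"
  define c where "c = g1 # X @ [g2]"
  have XF: "set X \<subseteq> F" using walk_edges_subset[OF X(1)] by auto
  have Xnv: "\<forall>e\<in>set X. \<not> incident ends v e" using walk_edges_subset[OF X(1)] by auto
  have u1v: "u1 \<noteq> v" using g(1,3) loopless unfolding u1_def by (auto simp: incident_def other_end_def)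
  have vX: "v \<notin> set (walk_verts ends u1 X)" using walk_avoids_unincident_vertex[OF X(1)[folded u1_def] u1v] by auto
  have wX: "walk ends F u1 X" using walk_mono[OF X(1) XF] unfolding u1_def .
  have i2: "incident ends u2 g2" "other_end ends u2 g2 = v" using incident_other_end[OF g(4)] other_end_other_end[OF g(4)]
    unfolding u2_def by auto
  have wc: "walk ends F v c" "walk_end ends v c = v" using wX g X(2) i2 unfolding c_def u1_def u2_def by auto
  have vsc: "walk_verts ends v c = v # walk_verts ends u1 X @ [v]" unfolding c_def u1_def
    using X(2) i2 unfolding u2_def by (simp add: walk_verts_append)
  have dtl: "distinct (tl (walk_verts ends v c))" using vsc vX X(3) unfolding u1_def by simp
  have g12X: "g1 \<notin> set X" "g2 \<notin> set X" using Xnv g by auto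
  have dc: "distinct c" using path_distinct_edges[OF X(1,3)] g12X g(5) unfolding c_def by auto
  from closed_path_circle[OF wc _ dtl dc vW] prod_set_eq_walk_sign[OF dc]
  have "circle ends W F (set (walk_verts ends v c)) (set c) \<and> (\<Prod>e\<in>set c. \<sigma> e) = walk_sign \<sigma> c"
    unfolding c_def by simp
  moreover have "set (walk_verts ends v c) = insert v (set (walk_verts ends u1 X))" using vsc by auto
  moreover have "set c = insert g1 (insert g2 (set X))" unfolding c_def by auto
  moreover have "walk_sign \<sigma> c = \<sigma> g1 * \<sigma> g2 * walk_sign \<sigma> X" unfolding c_def by simp
  ultimately show ?thesis unfolding u1_def by simp
qed

lemma neighbour_path_sign:
  assumes vW: "v \<in> W" and H: "circles_through_negative v"
    and g: "g1 \<in> F" "g2 \<in> F" "incident ends v g1" "incident ends v g2" "g1 \<noteq> g2"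
    and X: "walk ends {e\<in>F. \<not> incident ends v e} (other_end ends v g1) X"
      "walk_end ends (other_end ends v g1) X = other_end ends v g2" "distinct (walk_verts ends (other_end ends v g1) X)"
  shows "\<sigma> g1 * \<sigma> g2 * walk_sign \<sigma> X = -1"
proof -
  note c = circle_through_vertex[OF vW g X]
  have "(\<Prod>e\<in>insert g1 (insert g2 (set X)). \<sigma> e) = -1"
    using H c unfolding circles_through_negative_def by blast
  then show ?thesis using c by simp
qed

lemma no_three_edges_at_vertex:
  assumes vW: "v \<in> W" and H: "circles_through_negative v"
    and e: "e1 \<in> F" "e2 \<in> F" "e3 \<in> F" "incident ends v e1" "incident ends v e2" "incident ends v e3"
      "e1 \<noteq> e2" "e1 \<noteq> e3" "e2 \<noteq> e3"
  shows False
proof -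
  define Fv where "Fv = {e\<in>F. \<not> incident ends v e}"
  define u1 where "u1 = other_end ends v e1"
  define u2 where "u2 = other_end ends v e2"
  define u3 where "u3 = other_end ends v e3"
  have uW: "u1 \<in> W - {v}" "u2 \<in> W - {v}" "u3 \<in> W - {v}"
    using other_end_in_W_minus e unfolding u1_def u2_def u3_def by auto
  obtain P where P: "path ends Fv u1 P" "walk_end ends u1 P = u2"
    using path_avoiding_vertex[OF vW uW(1,2)] unfolding Fv_def by blast
  obtain R where R: "path ends Fv u3 R" "walk_end ends u3 R = u1"
    using path_avoiding_vertex[OF vW uW(3,1)] unfolding Fv_def by blast
  have "\<forall>e\<in>Fv. \<sigma> e \<in> {1, -1}" using sig unfolding Fv_def by auto
  then obtain X13 X23 where X: "path ends Fv u1 X13" "walk_end ends u1 X13 = u3" "path ends Fv u2 X23"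
    "walk_end ends u2 X23 = u3" and X_sign: "walk_sign \<sigma> X13 * walk_sign \<sigma> X23 = walk_sign \<sigma> P"
    using theta_paths[OF P R] by blast
  have "\<sigma> e1 * \<sigma> e2 * walk_sign \<sigma> P = -1"
    using neighbour_path_sign[OF vW H e(1,2,4,5,7)] P unfolding Fv_def u1_def u2_def by blast
  moreover have "\<sigma> e1 * \<sigma> e3 * walk_sign \<sigma> X13 = -1"
    using neighbour_path_sign[OF vW H e(1,3,4,6,8)] X(1,2) unfolding Fv_def u1_def u3_def by blast
  moreover have "\<sigma> e2 * \<sigma> e3 * walk_sign \<sigma> X23 = -1"
    using neighbour_path_sign[OF vW H e(2,3,5,6,9)] X(3,4) unfolding Fv_def u2_def u3_def by blast
  moreover have "\<sigma> e1 * \<sigma> e1 = 1" "\<sigma> e2 * \<sigma> e2 = 1" "\<sigma> e3 * \<sigma> e3 = 1"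
    "walk_sign \<sigma> P * walk_sign \<sigma> P = 1"
    using sigma_square e(1-3) walk_sign_square walk_edges_subset[OF conjunct1[OF P(1)]] unfolding Fv_def by auto
  ultimately show False using X_sign by algebra
qed

lemma tripod_circle_sign:
  assumes vW: "v \<in> W" and H: "circles_through_negative v" and tri: "tripod ends F T v [] L M"
    and \<gamma>: "path ends F (walk_end ends v L) \<gamma>" "walk_end ends (walk_end ends v L) \<gamma> = walk_end ends v M"
      "set (walk_verts ends (walk_end ends v L) \<gamma>) \<subseteq> T"
  shows "walk_sign \<sigma> L * walk_sign \<sigma> \<gamma> * walk_sign \<sigma> M = -1"
proof -
  let ?c = "L @ \<gamma> @ rev M"
  have c: "walk ends F v ?c" "walk_end ends v ?c = v" "distinct (tl (walk_verts ends v ?c))"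
    using closed_walk_through_tripod[OF tri \<gamma>] by auto
  have "\<gamma> \<noteq> []" using tripod_fan_ends_distinct[OF tri] \<gamma>(2) by auto
  moreover have "L \<noteq> []" "M \<noteq> []" using tri unfolding tripod_def by auto
  ultimately have "2 < length ?c" by (cases L; cases M; cases \<gamma>) auto
  from circle_of_closed_walk[OF c this vW]
  have "circle ends W F (set (walk_verts ends v ?c)) (set ?c)" "distinct ?c" by auto
  moreover have "v \<in> set (walk_verts ends v ?c)" by simp
  ultimately have "(\<Prod>e\<in>set ?c. \<sigma> e) = -1" using H unfolding circles_through_negative_def by blast
  then show ?thesis using prod_set_eq_walk_sign[OF \<open>distinct ?c\<close>] by (simp add: mult.assoc)
qed

lemma cycle_avoiding_vertex_positive:
  assumes vW: "v \<in> W" and H: "circles_through_negative v"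
    and q: "walk ends F y q" "walk_end ends y q = y" "q \<noteq> []" "distinct (tl (walk_verts ends y q))"
      "v \<notin> set (walk_verts ends y q)" "y \<in> W"
  shows "walk_sign \<sigma> q = 1"
proof -
  define T where "T = set (walk_verts ends y q)"
  have TW: "T \<subseteq> W" "v \<notin> T" using walk_verts_in_W[OF q(1) _ q(6)] q(5) unfolding T_def by auto
  obtain e q' where "q = e # q'" using q(3) by (cases q) auto
  then have yT: "y \<in> T" "other_end ends y e \<in> T" "y \<noteq> other_end ends y e"
    using q(1) loopless unfolding T_def by (auto simp: incident_def other_end_def)
  obtain L M where tri: "tripod ends F T v [] L M" using two_fan[OF vW TW yT] by blast
  then have "walk_end ends v L \<in> T" "walk_end ends v M \<in> T" "walk_end ends v L \<noteq> walk_end ends v M"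
    using tripod_fan_ends_distinct[OF tri] unfolding tripod_def by auto
  then obtain \<alpha> \<beta> where
    \<alpha>: "path ends F (walk_end ends v L) \<alpha>" "walk_end ends (walk_end ends v L) \<alpha> = walk_end ends v M"
      "set (walk_verts ends (walk_end ends v L) \<alpha>) \<subseteq> T" and
    \<beta>: "path ends F (walk_end ends v L) \<beta>" "walk_end ends (walk_end ends v L) \<beta> = walk_end ends v M"
      "set (walk_verts ends (walk_end ends v L) \<beta>) \<subseteq> T" and
    arcs: "walk_sign \<sigma> \<alpha> * walk_sign \<sigma> \<beta> = walk_sign \<sigma> q"
    using closed_path_two_arcs[OF q(1,2,4)] unfolding T_def by metis
  have "walk_sign \<sigma> L * walk_sign \<sigma> \<alpha> * walk_sign \<sigma> M = walk_sign \<sigma> L * walk_sign \<sigma> \<beta> * walk_sign \<sigma> M"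
    using tripod_circle_sign[OF vW H tri \<alpha>] tripod_circle_sign[OF vW H tri \<beta>] by simp
  then have "walk_sign \<sigma> \<alpha> = walk_sign \<sigma> \<beta>"
    using tripod_circle_sign[OF vW H tri \<alpha>] by (metis mult_cancel_left mult_cancel_right mult_eq_0_iff zero_neq_neg_one)
  moreover have "walk_sign \<sigma> \<alpha> * walk_sign \<sigma> \<alpha> = 1"
    using walk_sign_square[OF walk_edges_subset[OF conjunct1[OF \<alpha>(1)]]] .
  ultimately show ?thesis using arcs by simp
qed

lemma closed_walk_avoiding_vertex_positive:
  assumes vW: "v \<in> W" and H: "circles_through_negative v"
    and c: "walk ends {e\<in>F. \<not> incident ends v e} x c" "walk_end ends x c = x" "x \<in> W - {v}"
  shows "walk_sign \<sigma> c = 1"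
proof (rule ccontr)
  let ?Fv = "{e\<in>F. \<not> incident ends v e}"
  assume "walk_sign \<sigma> c \<noteq> 1"
  moreover have "walk_sign \<sigma> c \<in> {1,-1}" using walk_sign_pm1[of c \<sigma>] walk_edges_subset[OF c(1)] sig by auto
  ultimately have "walk_sign \<sigma> c = -1" by auto
  moreover have "\<forall>e\<in>?Fv. \<sigma> e \<in> {1,-1}" using sig by auto
  ultimately obtain y q where q: "walk ends ?Fv y q" "walk_end ends y q = y" "q \<noteq> []"
    "distinct (tl (walk_verts ends y q))" "walk_sign \<sigma> q
        = -1" "set (walk_verts ends y q) \<subseteq> set (walk_verts ends x c)"
    using negative_closed_walk_contains_negative_cycle[OF c(1,2)] by blast
  have "set (walk_verts ends x c) \<subseteq> W" "v \<notin> set (walk_verts ends x c)"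
    using walk_verts_in_W[OF c(1)] walk_avoids_unincident_vertex[OF c(1)] c(3) by auto
  then have "y \<in> W" "v \<notin> set (walk_verts ends y q)"
    using q(6) start_in_walk_verts[of y ends q] by blast+
  moreover have "walk ends F y q" using walk_mono[OF q(1)] walk_edges_subset[OF q(1)] by blast
  ultimately have "walk_sign \<sigma> q = 1" using cycle_avoiding_vertex_positive[OF vW H _ q(2-4)] by blast
  then show False using q(5) by simp
qed

lemma balancing_edge_reduction:
  assumes vW: "v \<in> W" and H: "circles_through_negative v"
    and Sv: "{e\<in>F. incident ends v e} = {e1, e2}" "e1 \<noteq> e2"
  shows "balancing_edge (W - {v}) (down_E F e1 e2) (down_ends ends v e1 e2) (down_sigma \<sigma> e1 e2) None"
proof -
  define Fv where "Fv = {e\<in>F. \<not> incident ends v e}"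
  have e: "e1 \<in> F" "e2 \<in> F" "incident ends v e1" "incident ends v e2" using Sv by blast+
  define u1 where "u1 = other_end ends v e1"
  define u2 where "u2 = other_end ends v e2"
  have uW: "u1 \<in> W - {v}" "u2 \<in> W - {v}" using other_end_in_W_minus e unfolding u1_def u2_def by auto
  have "\<forall>x\<in>W - {v}. \<exists>es. walk ends Fv u1 es \<and> walk_end ends u1 es = x"
    using path_avoiding_vertex[OF vW uW(1)] unfolding Fv_def by blast
  moreover have "\<forall>e\<in>Fv. fst (ends e) \<in> W - {v}" using endsW unfolding Fv_def incident_def by auto
  moreover have "\<forall>c. walk ends Fv u1 c \<and> walk_end ends u1 c = u1 \<longrightarrow> walk_sign \<sigma> c = 1"
    using closed_walk_avoiding_vertex_positive[OF vW H] uW(1) unfolding Fv_def by blast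
  moreover have "\<forall>e\<in>Fv. \<sigma> e \<in> {1, -1}" using sig unfolding Fv_def by auto
  ultimately obtain \<zeta> where \<zeta>: "\<forall>x. \<zeta> x \<in> {1,-1}" "\<forall>e\<in>Fv. switch_sign ends \<sigma> \<zeta> e = 1"
    and \<zeta>_walk: "\<And>es. walk ends Fv u1 es \<Longrightarrow> \<zeta> (walk_end ends u1 es) = walk_sign \<sigma> es"
    by (rule switching_of_balanced_walks) (rule that)
  obtain X where X: "walk ends Fv u1 X" "walk_end ends u1 X = u2" "distinct (walk_verts ends u1 X)"
    using path_avoiding_vertex[OF vW uW(1,2)] unfolding Fv_def by blast
  have "\<zeta> u1 = 1" using \<zeta>_walk[of "[]"] by simp
  moreover have "\<zeta> u2 = walk_sign \<sigma> X" using \<zeta>_walk[OF X(1)] X(2) by simp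
  moreover have "\<sigma> e1 * \<sigma> e2 * walk_sign \<sigma> X = -1"
    using neighbour_path_sign[OF vW H e Sv(2)] X unfolding Fv_def u1_def u2_def by blast
  ultimately have "switch_sign (down_ends ends v e1 e2) (down_sigma \<sigma> e1 e2) \<zeta> None = -1"
    by (simp add: switch_sign_def down_ends_def down_sigma_def u1_def u2_def mult.commute mult.left_commute)
  moreover have "switch_sign (down_ends ends v e1 e2) (down_sigma \<sigma> e1 e2) \<zeta> (Some e) = 1"
    if "e \<in> F - {e1, e2}" for e
    using that Sv \<zeta>(2) by (auto simp: Fv_def switch_sign_def down_ends_def down_sigma_def)
  ultimately show ?thesis using \<zeta>(1) unfolding balancing_edge_def down_E_def by auto
qed

lemma balancing_imp_circle_negative:
  assumes Sv: "{e\<in>F. incident ends v e} = {e1, e2}" "e1 \<noteq> e2"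
    and bal: "balancing_edge (W - {v}) (down_E F e1 e2) (down_ends ends v e1 e2) (down_sigma \<sigma> e1 e2) None"
    and circ: "circle ends W F C D" and vC: "v \<in> C"
  shows "(\<Prod>e\<in>D. \<sigma> e) = -1"
proof -
  obtain \<zeta> where \<zeta>: "\<forall>x. \<zeta> x \<in> {1,-1}"
    "\<forall>f\<in>down_E F e1 e2. switch_sign (down_ends ends v e1 e2) (down_sigma \<sigma> e1 e2) \<zeta> f
        = (if f = None then -1 else 1)"
    using bal unfolding balancing_edge_def by blast
  define \<zeta>' where "\<zeta>' = \<zeta>(v := 1)"
  have D: "C \<subseteq> W" "D \<subseteq> F" using circ unfolding circle_def subgraph_def by auto
  have fin: "finite C" "finite D" using D finW finF finite_subset by blast+
  have "card {e\<in>D. incident ends v e} = 2"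
    using card_incident_circle[OF circ fin(2) _ vC] loopless D(2) by auto
  moreover have "{e\<in>D. incident ends v e} \<subseteq> {e1, e2}" using Sv D(2) by auto
  ultimately have Dv: "{e\<in>D. incident ends v e} = {e1, e2}"
    using card_subset_eq[of "{e1, e2}"] Sv(2) by simp
  have "switch_sign ends \<sigma> \<zeta>' e1 * switch_sign ends \<sigma> \<zeta>' e2 = -1"
  proof -
    have "incident ends v e1" "incident ends v e2" "other_end ends v e1 \<noteq> v" "other_end ends v e2 \<noteq> v"
      using other_end_in_W_minus Sv by blast+
    then have "switch_sign ends \<sigma> \<zeta>' e1 * switch_sign ends \<sigma> \<zeta>' e2
        = \<zeta> (other_end ends v e1) * (\<sigma> e1 * \<sigma> e2) * \<zeta> (other_end ends v e2)"
      by (simp add: switch_sign_incident \<zeta>'_def)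
    also have "\<dots> = -1"
      using \<zeta>(2)[rule_format, of None] by (simp add: down_E_def switch_sign_def down_ends_def down_sigma_def)
    finally show ?thesis .
  qed
  moreover have "switch_sign ends \<sigma> \<zeta>' e = 1" if "e \<in> D - {e1, e2}" for e
  proof -
    have "\<not> incident ends v e" "e \<in> F" using that Dv D(2) by auto
    then show ?thesis
      using \<zeta>(2)[rule_format, of "Some e"] that
      by (auto simp: \<zeta>'_def incident_def down_E_def switch_sign_def down_ends_def down_sigma_def)
  qed
  moreover have "{e1, e2} \<subseteq> D" using Dv by auto
  ultimately have "(\<Prod>e\<in>D. switch_sign ends \<sigma> \<zeta>' e) = -1"
    using Sv(2) fin(2) prod.subset_diff[of "{e1, e2}" D "switch_sign ends \<sigma> \<zeta>'"] by (simp add: prod.neutral)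
  moreover have "\<forall>x. \<zeta>' x \<in> {1,-1}" using \<zeta>(1) by (simp add: \<zeta>'_def)
  ultimately show ?thesis using prod_switch_sign_circle[OF circ fin] by simp
qed

lemma circles_through_negative_imp_balancing:
  assumes vW: "v \<in> W" and H: "circles_through_negative v"
    and circ: "circle ends W F C0 D0"
  shows "degree ends F v = 2 \<and>
          (\<exists>e1 e2. e1 \<noteq> e2 \<and> {e\<in>F. incident ends v e} = {e1, e2} \<and>
             balancing_edge (W - {v}) (down_E F e1 e2) (down_ends ends v e1 e2)
               (down_sigma \<sigma> e1 e2) None)"
proof -
  obtain e1 e2 where e: "e1 \<noteq> e2" "e1 \<in> F" "e2 \<in> F" "incident ends v e1" "incident ends v e2"
    using two_edges_at_vertex[OF vW circ] by blast
  have Sv: "{e\<in>F. incident ends v e} = {e1, e2}"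
    using e no_three_edges_at_vertex[OF vW H e(2,3) _ e(4,5) _ e(1)] by blast
  have "degree ends F v = 2" unfolding degree_def Sv using e(1) by simp
  then show ?thesis using balancing_edge_reduction[OF vW H Sv e(1)] Sv e(1) by blast
qed

end

lemma block_signed_nonseparable_graph:
  assumes "is_graph V E ends" "\<forall>e\<in>E. \<sigma> e \<in> {1, -1}" "\<forall>e\<in>E. fst (ends e) \<noteq> snd (ends e)"
    and "block ends V E W F"
  shows "signed_nonseparable_graph ends W F \<sigma>"
proof -
  have "W \<subseteq> V" "F \<subseteq> E" using assms(4) unfolding block_def subgraph_def by auto
  then have "finite W" "finite F" using assms(1) finite_subset unfolding is_graph_def by blast+
  then show ?thesis using assms \<open>F \<subseteq> E\<close> unfolding block_def subgraph_def
    by unfold_locales auto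
qed

theorem mainTheorem12:
  fixes V :: "'v set" and E :: "'e set" and ends :: "'e \<Rightarrow> 'v \<times> 'v"
    and \<sigma> :: "'e \<Rightarrow> int" and W :: "'v set" and F :: "'e set" and v :: 'v
  assumes graph: "is_graph V E ends"
    and sig: "\<forall>e\<in>E. \<sigma> e \<in> {1, -1}"
    and loopless: "\<forall>e\<in>E. fst (ends e) \<noteq> snd (ends e)"
    and blk: "block ends V E W F"
    and has_circle: "\<exists>C D. circle ends W F C D"
    and vB: "v \<in> W"
  shows "(\<forall>C D. circle ends W F C D
      \<and> v \<in> C \<longrightarrow> (\<Prod>e\<in>D. \<sigma> e) = -1) \<longleftrightarrow>
         (degree ends F v = 2 \<and>
          (\<exists>e1 e2. e1 \<noteq> e2 \<and> {e\<in>F. incident ends v e} = {e1, e2} \<and>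
             balancing_edge (W - {v}) (down_E F e1 e2) (down_ends ends v e1 e2)
               (down_sigma \<sigma> e1 e2) None))"
proof -
  interpret signed_nonseparable_graph ends W F \<sigma>
    using block_signed_nonseparable_graph[OF graph sig loopless blk] .
  obtain C0 D0 where circ: "circle ends W F C0 D0" using has_circle by blast
  show ?thesis (is "?all_negative \<longleftrightarrow> ?balancing")
  proof
    assume ?all_negative
    then show ?balancing
      using circles_through_negative_imp_balancing[OF vB _ circ] unfolding circles_through_negative_def by blast
  next
    assume ?balancing
    then show ?all_negative using balancing_imp_circle_negative by blast
  qed
qed

end
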